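(* Let $\mathcal K$ be a 2-category and $\{\lambda_{i,j}:s_js_i\to s_is_j\}_{0\le i<j\le 2}$ a 0-cell of $\mathsf{Wdl}^{(2)}(\overline{\mathcal K})$. Define the 2-cells $\overrightarrow\lambda_{0,p,q}:=\mu_0s_ps_q.s_0\lambda_{0,p}s_q.s_0s_p\lambda_{0,q}.s_0s_ps_q\eta_0:s_0s_ps_q\to s_0s_ps_q$ for $(p,q)\in\{(1,2),(2,1)\}$, and $\overleftarrow\lambda_{k,l,2}:=s_ks_l\mu_2.s_k\lambda_{l,2}s_2.\lambda_{k,2}s_ls_2.\eta_2s_ks_ls_2:s_ks_ls_2\to s_ks_ls_2$ for $(k,l)\in\{(0,1),(1,0)\}$. These are idempotent 2-cells in $\mathcal K$ and satisfy: (1) $\overrightarrow\lambda_{0,p,q}.\bar\lambda_{0p}s_q=\overrightarrow\lambda_{0,p,q}=\bar\lambda_{0p}s_q.\overrightarrow\lambda_{0,p,q}$; (2) $\overrightarrow\lambda_{0,1,2}.s_0\lambda_{1,2}=s_0\lambda_{1,2}.\overrightarrow\lambda_{0,2,1}$; (3) $\overrightarrow\lambda_{0,p,q}.\lambda_{0,p}s_q=\lambda_{0,p}s_q.s_p\bar\lambda_{0q}$; (4) $\overleftarrow\lambda_{k,l,2}.s_k\bar\lambda_{l2}=\overleftarrow\lambda_{k,l,2}=s_k\bar\lambda_{l2}.\overleftarrow\lambda_{k,l,2}$; (5) $\overleftarrow\lambda_{0,1,2}.\lambda_{0,1}s_2=\lambda_{0,1}s_2.\overleftarrow\lambda_{1,0,2}$;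 (6) $\overleftarrow\lambda_{k,l,2}.s_k\lambda_{l,2}=s_k\lambda_{l,2}.\bar\lambda_{k2}s_l$; (7) $\overleftarrow\lambda_{0,1,2}.\overrightarrow\lambda_{0,1,2}=\overleftarrow\lambda_{0,1,2}.\bar\lambda_{01}s_2=\overrightarrow\lambda_{0,1,2}.s_0\bar\lambda_{12}=\overrightarrow\lambda_{0,1,2}.\overleftarrow\lambda_{0,1,2}$.
   Context: Conventions. For 1-cells, $uw$ is the horizontal composite ($w$ first); for 2-cells $\alpha,\beta$, $\alpha\beta$ is their horizontal composite; a 1-cell next to a 2-cell means whiskering by its identity 2-cell; $\alpha.\beta$ is vertical composition ($\beta$ first). A monad $(A,t)$ has multiplication $\mu:tt\to t$ and unit $\eta:1_A\to t$; indices carry over ($s_i$ has $\mu_i,\eta_i$). Local idempotent closure $\overline{\mathcal K}$: same 0-cells as $\mathcal K$; 1-cells are pairs $(v,\bar v)$ with $v$ a 1-cell of $\mathcal K$ and $\bar v:v\to v$ an idempotent 2-cell; 2-cells $(v,\bar v)\to(v',\bar v')$ are 2-cells $\omega:v\to v'$ of $\mathcal K$ with $\bar v'.\omega=\omega=\omega.\bar v$; compositions induced from $\mathcal K$, identity 2-cell of $(v,\bar v)$ is $\bar v$. A monad $(A,(t,\bar t))$ in $\overline{\mathcal K}$ satisfies in particular $\mu.t\eta=\mu.\eta t=\bar t$; we write just $t$. A weak distributive law in $\overline{\mathcal K}$: monads $(A,t),(A,s)$ in $\overline{\mathcal K}$ and a 2-cell $\lambda:ts\to st$ of $\overline{\mathcal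 K}$ with $\lambda.\mu s=s\mu.\lambda t.t\lambda$, $\lambda.t\mu=\mu t.s\lambda.\lambda s$, $\lambda.\eta s=\mu t.s\lambda.st\eta.s\eta$, $\lambda.t\eta=s\mu.\lambda t.\eta st.\eta t$; its idempotent is $\bar\lambda:=\mu t.s\lambda.st\eta=s\mu.\lambda t.\eta st$. A 0-cell of $\mathsf{Wdl}^{(2)}(\overline{\mathcal K})$ consists of monads $(A,s_0),(A,s_1),(A,s_2)$ in $\overline{\mathcal K}$ and weak distributive laws $\lambda_{i,j}:s_js_i\to s_is_j$ in $\overline{\mathcal K}$ ($0\le i<j\le2$) satisfying the Yang–Baxter relation $\lambda_{0,1}s_2.s_1\lambda_{0,2}.\lambda_{1,2}s_0=s_0\lambda_{1,2}.\lambda_{0,2}s_1.s_2\lambda_{0,1}$. $\bar\lambda_{ij}$ denotes the idempotent of $\lambda_{i,j}$. *)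

theory Defs
  imports Main
begin

text \<open>A (strict) 2-category, given by its 0-cells (type 'o), 1-cells (type 'm) and
2-cells (type 'c).  comp1 u w is the horizontal composite uw (w first),
vcomp a b is the vertical composite a.b (b first), hcomp a b the horizontal
composite ab of 2-cells, id1 and id2 are identities.\<close>

record ('o,'m,'c) twocat =
  src   :: "'m \<Rightarrow> 'o"
  tgt   :: "'m \<Rightarrow> 'o"
  comp1 :: "'m \<Rightarrow> 'm \<Rightarrow> 'm"
  id1   :: "'o \<Rightarrow> 'm"
  dom2  :: "'c \<Rightarrow> 'm"
  cod2  :: "'c \<Rightarrow> 'm"
  vcomp :: "'c \<Rightarrow> 'c \<Rightarrow> 'c"
  hcomp :: "'c \<Rightarrow> 'c \<Rightarrow> 'c"
  id2   :: "'m \<Rightarrow> 'c"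

locale two_category =
  fixes K :: "('o,'m,'c) twocat"
  assumes id1_src: "src K (id1 K x) = x"
    and id1_tgt: "tgt K (id1 K x) = x"
    and comp1_src: "src K u = tgt K w \<Longrightarrow> src K (comp1 K u w) = src K w"
    and comp1_tgt: "src K u = tgt K w \<Longrightarrow> tgt K (comp1 K u w) = tgt K u"
    and comp1_assoc: "src K u = tgt K v \<Longrightarrow> src K v = tgt K w \<Longrightarrow>
           comp1 K (comp1 K u v) w = comp1 K u (comp1 K v w)"
    and comp1_idl: "comp1 K (id1 K (tgt K u)) u = u"
    and comp1_idr: "comp1 K u (id1 K (src K u)) = u"
    and par_src: "src K (dom2 K a) = src K (cod2 K a)"
    and par_tgt: "tgt K (dom2 K a) = tgt K (cod2 K a)"
    and id2_dom: "dom2 K (id2 K u) = u"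
    and id2_cod: "cod2 K (id2 K u) = u"
    and vcomp_dom: "dom2 K a = cod2 K b \<Longrightarrow> dom2 K (vcomp K a b) = dom2 K b"
    and vcomp_cod: "dom2 K a = cod2 K b \<Longrightarrow> cod2 K (vcomp K a b) = cod2 K a"
    and vcomp_assoc: "dom2 K a = cod2 K b \<Longrightarrow> dom2 K b = cod2 K c \<Longrightarrow>
           vcomp K (vcomp K a b) c = vcomp K a (vcomp K b c)"
    and vcomp_idl: "vcomp K (id2 K (cod2 K a)) a = a"
    and vcomp_idr: "vcomp K a (id2 K (dom2 K a)) = a"
    and hcomp_dom: "src K (dom2 K a) = tgt K (dom2 K b) \<Longrightarrow>
           dom2 K (hcomp K a b) = comp1 K (dom2 K a) (dom2 K b)"
    and hcomp_cod: "src K (dom2 K a) = tgt K (dom2 K b) \<Longrightarrow>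
           cod2 K (hcomp K a b) = comp1 K (cod2 K a) (cod2 K b)"
    and hcomp_assoc: "src K (dom2 K a) = tgt K (dom2 K b) \<Longrightarrow> src K (dom2 K b) = tgt K (dom2 K c) \<Longrightarrow>
           hcomp K (hcomp K a b) c = hcomp K a (hcomp K b c)"
    and hcomp_idl: "hcomp K (id2 K (id1 K (tgt K (dom2 K a)))) a = a"
    and hcomp_idr: "hcomp K a (id2 K (id1 K (src K (dom2 K a)))) = a"
    and hcomp_id2: "src K u = tgt K w \<Longrightarrow> hcomp K (id2 K u) (id2 K w) = id2 K (comp1 K u w)"
    and interchange: "dom2 K a = cod2 K b \<Longrightarrow> dom2 K c = cod2 K d \<Longrightarrow>
           src K (dom2 K a) = tgt K (dom2 K c) \<Longrightarrow>
           hcomp K (vcomp K a b) (vcomp K c d) = vcomp K (hcomp K a c) (hcomp K b d)"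

text \<open>A 1-cell (t,tb) of the local idempotent closure: tb : t \<rightarrow> t idempotent.\<close>
definition idem_2cell :: "('o,'m,'c) twocat \<Rightarrow> 'm \<Rightarrow> 'c \<Rightarrow> bool" where
  "idem_2cell K v e \<longleftrightarrow> dom2 K e = v \<and> cod2 K e = v \<and> vcomp K e e = e"

text \<open>A 2-cell w : (v,vb) \<rightarrow> (v',vb') of the local idempotent closure.\<close>
definition cl_2cell :: "('o,'m,'c) twocat \<Rightarrow> 'm \<Rightarrow> 'c \<Rightarrow> 'm \<Rightarrow> 'c \<Rightarrow> 'c \<Rightarrow> bool" where
  "cl_2cell K v vb v' vb' w \<longleftrightarrow> dom2 K w = v \<and> cod2 K w = v' \<and>
      vcomp K vb' w = w \<and> w = vcomp K w vb"

text \<open>A monad (A,(t,tb)) with multiplication mu and unit eta in the local idempotent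
closure; whiskering by the 1-cell (t,tb) is horizontal composition with its identity 2-cell tb,
and the identity 1-cell of A is (1_A, identity 2-cell of 1_A).\<close>
definition cl_monad :: "('o,'m,'c) twocat \<Rightarrow> 'o \<Rightarrow> 'm \<Rightarrow> 'c \<Rightarrow> 'c \<Rightarrow> 'c \<Rightarrow> bool" where
  "cl_monad K A t tb mu eta \<longleftrightarrow>
     src K t = A \<and> tgt K t = A \<and> idem_2cell K t tb \<and>
     cl_2cell K (comp1 K t t) (hcomp K tb tb) t tb mu \<and>
     cl_2cell K (id1 K A) (id2 K (id1 K A)) t tb eta \<and>
     vcomp K mu (hcomp K mu tb) = vcomp K mu (hcomp K tb mu) \<and>
     vcomp K mu (hcomp K tb eta) = tb \<and>
     vcomp K mu (hcomp K eta tb) = tb"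

definition cl_wdl :: "('o,'m,'c) twocat \<Rightarrow> 'o \<Rightarrow> 'm \<Rightarrow> 'c \<Rightarrow> 'c \<Rightarrow> 'c \<Rightarrow>
                      'm \<Rightarrow> 'c \<Rightarrow> 'c \<Rightarrow> 'c \<Rightarrow> 'c \<Rightarrow> bool" where
  "cl_wdl K A t tb mut etat s sb mus etas l \<longleftrightarrow>
     cl_monad K A t tb mut etat \<and> cl_monad K A s sb mus etas \<and>
     cl_2cell K (comp1 K t s) (hcomp K tb sb) (comp1 K s t) (hcomp K sb tb) l \<and>
     vcomp K l (hcomp K mut sb) =
       vcomp K (hcomp K sb mut) (vcomp K (hcomp K l tb) (hcomp K tb l)) \<and>
     vcomp K l (hcomp K tb mus) =
       vcomp K (hcomp K mus tb) (vcomp K (hcomp K sb l) (hcomp K l sb)) \<and>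
     vcomp K l (hcomp K etat sb) =
       vcomp K (hcomp K mus tb) (vcomp K (hcomp K sb l)
         (vcomp K (hcomp K (hcomp K sb tb) etas) (hcomp K sb etat))) \<and>
     vcomp K l (hcomp K tb etas) =
       vcomp K (hcomp K sb mut) (vcomp K (hcomp K l tb)
         (vcomp K (hcomp K etat (hcomp K sb tb)) (hcomp K etas tb)))"

definition wdl_idem :: "('o,'m,'c) twocat \<Rightarrow> 'c \<Rightarrow> 'c \<Rightarrow> 'c \<Rightarrow> 'c \<Rightarrow> 'c \<Rightarrow> 'c" where
  "wdl_idem K tb sb mus etas l =
     vcomp K (hcomp K mus tb) (vcomp K (hcomp K sb l) (hcomp K (hcomp K sb tb) etas))"

text \<open>0-cells of Wdl^(2) of the local idempotent closure: monads s0,s1,s2 on A,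
weak distributive laws l_ij : s_j s_i \<rightarrow> s_i s_j (i<j) and the Yang-Baxter relation.\<close>
definition wdl2_cell :: "('o,'m,'c) twocat \<Rightarrow> 'o \<Rightarrow>
     'm \<Rightarrow> 'c \<Rightarrow> 'c \<Rightarrow> 'c \<Rightarrow> 'm \<Rightarrow> 'c \<Rightarrow> 'c \<Rightarrow> 'c \<Rightarrow> 'm \<Rightarrow> 'c \<Rightarrow> 'c \<Rightarrow> 'c \<Rightarrow>
     'c \<Rightarrow> 'c \<Rightarrow> 'c \<Rightarrow> bool" where
  "wdl2_cell K A s0 sb0 mu0 eta0 s1 sb1 mu1 eta1 s2 sb2 mu2 eta2 l01 l02 l12 \<longleftrightarrow>
     cl_wdl K A s1 sb1 mu1 eta1 s0 sb0 mu0 eta0 l01 \<and>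
     cl_wdl K A s2 sb2 mu2 eta2 s0 sb0 mu0 eta0 l02 \<and>
     cl_wdl K A s2 sb2 mu2 eta2 s1 sb1 mu1 eta1 l12 \<and>
     vcomp K (hcomp K l01 sb2) (vcomp K (hcomp K sb1 l02) (hcomp K l12 sb0)) =
     vcomp K (hcomp K sb0 l12) (vcomp K (hcomp K l02 sb1) (hcomp K sb2 l01))"

definition rlam :: "('o,'m,'c) twocat \<Rightarrow> 'm \<Rightarrow> 'c \<Rightarrow> 'c \<Rightarrow> 'm \<Rightarrow> 'm \<Rightarrow> 'c \<Rightarrow> 'c \<Rightarrow> 'c" where
  "rlam K s0 mu0 eta0 sp sq l0p l0q =
     vcomp K (hcomp K mu0 (id2 K (comp1 K sp sq)))
      (vcomp K (hcomp K (hcomp K (id2 K s0) l0p) (id2 K sq))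
       (vcomp K (hcomp K (id2 K (comp1 K s0 sp)) l0q)
        (hcomp K (id2 K (comp1 K s0 (comp1 K sp sq))) eta0)))"

definition llam :: "('o,'m,'c) twocat \<Rightarrow> 'm \<Rightarrow> 'm \<Rightarrow> 'm \<Rightarrow> 'c \<Rightarrow> 'c \<Rightarrow> 'c \<Rightarrow> 'c \<Rightarrow> 'c" where
  "llam K sk sl s2 mu2 eta2 lk2 ll2 =
     vcomp K (hcomp K (id2 K (comp1 K sk sl)) mu2)
      (vcomp K (hcomp K (hcomp K (id2 K sk) ll2) (id2 K s2))
       (vcomp K (hcomp K lk2 (id2 K (comp1 K sl s2)))
        (hcomp K eta2 (id2 K (comp1 K sk (comp1 K sl s2))))))"

end

theory Submission
  imports Defs
begin

text \<open>The 2-cells of the lemma are composites of whiskered generators: the multiplications and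
  units of the monads, the three laws and the idempotents carried by the local idempotent closure.
  We write such a composite as a vertical chain of generators, each acting on a segment of a word
  in s0, s1, s2, and prove every identity by rewriting chains: generators acting on disjoint
  segments commute (interchange law), idempotents are absorbed by the generators they touch, and
  the monad axioms, the axioms of a weak distributive law and the Yang--Baxter relation are
  applied in context. Most identities for the 2-cells built from mu2 and eta2 are those for the
  2-cells built from mu0 and eta0 in the horizontal opposite of K, where the order of s0, s1, s2
  is reversed.\<close>

section \<open>Whiskered 2-cells between words of endo-1-cells\<close>

locale endo_2cat = two_category K for K :: "('o,'m,'c) twocat" + fixes A :: 'o
begin

definition endo :: "'m \<Rightarrow> bool" where "endo u \<longleftrightarrow> src K u = A \<and> tgt K u = A"
definition endos :: "'m list \<Rightarrow> bool" where "endos xs \<longleftrightarrow> list_all endo xs"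

fun comp_word :: "'m list \<Rightarrow> 'm" where
  "comp_word [] = id1 K A" | "comp_word (x#xs) = comp1 K x (comp_word xs)"

abbreviation vc (infixr "\<odot>" 55) where "a \<odot> b \<equiv> vcomp K a b"

lemma endos_simps[simp]:
  "endos [] = True" "endos (x#xs) = (endo x \<and> endos xs)" "endos (xs@ys) = (endos xs \<and> endos ys)"
  by (auto simp: endos_def)

lemma endos_take: "endos xs \<Longrightarrow> endos (take n xs)"
  and endos_drop: "endos xs \<Longrightarrow> endos (drop n xs)"
  unfolding endos_def by (simp_all add: list_all_iff) (meson in_set_takeD in_set_dropD)+

lemma comp_word_src[simp]: "endos xs \<Longrightarrow> src K (comp_word xs) = A"
  and comp_word_tgt[simp]: "endos xs \<Longrightarrow> tgt K (comp_word xs) = A"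
  by (induction xs) (auto simp: id1_src id1_tgt endo_def comp1_src comp1_tgt)

lemma comp_word_append[simp]:
  "endos xs \<Longrightarrow> endos ys \<Longrightarrow> comp1 K (comp_word xs) (comp_word ys) = comp_word (xs @ ys)"
proof (induction xs)
  case Nil
  then show ?case using comp1_idl[of "comp_word ys"] by simp
next
  case (Cons x xs)
  then show ?case by (simp add: comp1_assoc endo_def)
qed

lemma comp_word_Nil: "comp_word [] = id1 K A" by (rule comp_word.simps(1))

lemma comp_word_single: "endo x \<Longrightarrow> comp_word [x] = x"
  using comp1_idr[of x] by (simp add: endo_def)

declare comp_word.simps[simp del]

lemma comp_word_two: "endo x \<Longrightarrow> endo y \<Longrightarrow> comp_word [x,y] = comp1 K x y"
  using comp_word_single[of y] by (simp add: comp_word.simps)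

lemma comp_word_three: "endo x \<Longrightarrow> endo y \<Longrightarrow> endo z \<Longrightarrow>
  comp1 K x (comp1 K y z) = comp_word [x,y,z]"
  using comp_word_append[of "[x]" "[y,z]"] by (simp add: comp_word_two comp_word_single)

definition cell :: "'c \<Rightarrow> 'm list \<Rightarrow> 'm list \<Rightarrow> bool" where
  "cell g D C \<longleftrightarrow> endos D \<and> endos C \<and> dom2 K g = comp_word D \<and> cod2 K g = comp_word C"

definition id_word :: "'m list \<Rightarrow> 'c" where "id_word X = id2 K (comp_word X)"

definition whisk :: "'m list \<Rightarrow> 'c \<Rightarrow> 'm list \<Rightarrow> 'c" where
  "whisk u x w = hcomp K (id_word u) (hcomp K x (id_word w))"

lemma cell_endos: "cell x D C \<Longrightarrow> endos D \<and> endos C" by (simp add: cell_def)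

lemma cell_id_word: "endos X \<Longrightarrow> cell (id_word X) X X"
  by (simp add: cell_def id_word_def id2_dom id2_cod)

lemma cell_hcomp: "cell a D C \<Longrightarrow> cell b D' C' \<Longrightarrow> cell (hcomp K a b) (D@D') (C@C')"
  unfolding cell_def by (simp add: hcomp_dom hcomp_cod)

lemma cell_vcomp: "cell a D C \<Longrightarrow> cell b D' D \<Longrightarrow> cell (a \<odot> b) D' C"
  unfolding cell_def by (simp add: vcomp_dom vcomp_cod)

lemma cell_whisk: "cell x D C \<Longrightarrow> endos u \<Longrightarrow> endos w \<Longrightarrow>
  cell (whisk u x w) (u@D@w) (u@C@w)"
  unfolding whisk_def by (intro cell_hcomp cell_id_word) auto

lemma id_word_dom[simp]: "dom2 K (id_word X) = comp_word X"
  and id_word_cod[simp]: "cod2 K (id_word X) = comp_word X"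
  by (simp_all add: id_word_def id2_dom id2_cod)

lemma id2_eq_id_word1: "endo x \<Longrightarrow> id2 K x = id_word [x]"
  unfolding id_word_def by (simp add: comp_word_single)

lemma id2_eq_id_word2: "endo x \<Longrightarrow> endo y \<Longrightarrow> id2 K (comp1 K x y) = id_word [x,y]"
  unfolding id_word_def by (simp add: comp_word_two)

lemma id2_eq_id_word3: "endo x \<Longrightarrow> endo y \<Longrightarrow> endo z \<Longrightarrow>
  id2 K (comp1 K x (comp1 K y z)) = id_word [x,y,z]"
  unfolding id_word_def by (simp add: comp_word_three)

lemma hcomp_id_word: "endos X \<Longrightarrow> endos Y \<Longrightarrow> hcomp K (id_word X) (id_word Y) = id_word (X@Y)"
  unfolding id_word_def by (simp add: hcomp_id2)

lemma hcomp_id_word_Nil_left: "cell x D C \<Longrightarrow> hcomp K (id_word []) x = x"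
  using hcomp_idl[of x] unfolding cell_def id_word_def by (simp add: comp_word_Nil)

lemma hcomp_id_word_Nil_right: "cell x D C \<Longrightarrow> hcomp K x (id_word []) = x"
  using hcomp_idr[of x] unfolding cell_def id_word_def by (simp add: comp_word_Nil)

lemma hcomp_assoc_cell: "cell a D C \<Longrightarrow> cell b D' C' \<Longrightarrow> cell c D'' C'' \<Longrightarrow>
   hcomp K (hcomp K a b) c = hcomp K a (hcomp K b c)"
  unfolding cell_def by (intro hcomp_assoc) auto

lemma vcomp_assoc_cell: "cell a D C \<Longrightarrow> cell b D' D \<Longrightarrow> cell c D'' D' \<Longrightarrow> (a
  \<odot> b) \<odot> c = a \<odot> (b \<odot> c)"
  unfolding cell_def by (intro vcomp_assoc) auto

lemma vcomp_id_word_left: "cell a D C \<Longrightarrow> id_word C \<odot> a = a"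
  using vcomp_idl[of a] unfolding cell_def id_word_def by simp

lemma vcomp_id_word_right: "cell a D C \<Longrightarrow> a \<odot> id_word D = a"
  using vcomp_idr[of a] unfolding cell_def id_word_def by simp

lemma id_word_vcomp: "cod2 K r = comp_word X \<Longrightarrow> id_word X \<odot> r = r"
  unfolding id_word_def using vcomp_idl[of r] by simp

lemma vcomp_id_word_cancel:
  "x \<odot> id_word X = y \<odot> id_word X \<Longrightarrow> dom2 K x = comp_word X \<Longrightarrow>
    dom2 K y = comp_word X \<Longrightarrow> x = y"
  unfolding id_word_def by (metis vcomp_idr)

lemma interchange_cell: "cell a D C \<Longrightarrow> cell a' C C' \<Longrightarrow> cell b P Q \<Longrightarrow>
  cell b' Q Q' \<Longrightarrow>
  hcomp K (a' \<odot> a) (b' \<odot> b) = hcomp K a' b' \<odot> hcomp K a b"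
  unfolding cell_def by (intro interchange) auto

lemma whisk_Nil: "cell x D C \<Longrightarrow> whisk [] x [] = x"
  unfolding whisk_def by (simp add: hcomp_id_word_Nil_left hcomp_id_word_Nil_right)

lemma whisk_id_word: "endos u \<Longrightarrow> endos X \<Longrightarrow> endos w \<Longrightarrow>
  whisk u (id_word X) w = id_word (u@X@w)"
  unfolding whisk_def by (simp add: hcomp_id_word)

lemma hcomp_id_word_right: "cell g D C \<Longrightarrow> endos w \<Longrightarrow> hcomp K g (id_word w) = whisk [] g w"
  unfolding whisk_def using hcomp_id_word_Nil_left[OF cell_hcomp[OF _ cell_id_word]] by simp

lemma hcomp_id_word_left: "cell g D C \<Longrightarrow> endos u \<Longrightarrow> hcomp K (id_word u) g = whisk u g []"
  unfolding whisk_def using hcomp_id_word_Nil_right by simp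

lemma hcomp_id_word_both:
  "cell g D C \<Longrightarrow> endos u \<Longrightarrow> endos w \<Longrightarrow>
    hcomp K (hcomp K (id_word u) g) (id_word w) = whisk u g w"
  unfolding whisk_def by (rule hcomp_assoc_cell[OF cell_id_word _ cell_id_word]) auto

lemma dom_whisk[simp]: "src K (dom2 K x) = A \<Longrightarrow> tgt K (dom2 K x) = A \<Longrightarrow>
  endos u \<Longrightarrow> endos w \<Longrightarrow>
   dom2 K (whisk u x w) = comp1 K (comp_word u) (comp1 K (dom2 K x) (comp_word w))"
  unfolding whisk_def id_word_def by (simp add: hcomp_dom id2_dom comp1_tgt)

lemma cod_whisk[simp]: "src K (dom2 K x) = A \<Longrightarrow> tgt K (dom2 K x) = A \<Longrightarrow>
  endos u \<Longrightarrow> endos w \<Longrightarrow>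
   cod2 K (whisk u x w) = comp1 K (comp_word u) (comp1 K (cod2 K x) (comp_word w))"
  unfolding whisk_def id_word_def by (simp add: hcomp_dom hcomp_cod id2_dom id2_cod comp1_tgt)

lemma whisk_vcomp:
  assumes "dom2 K x = cod2 K y" "src K (dom2 K x) = A" "tgt K (dom2 K x) = A"
    and "src K (dom2 K y) = A" "tgt K (dom2 K y) = A" "endos u" "endos w"
  shows "whisk u (x \<odot> y) w = whisk u x w \<odot> whisk u y w"
proof -
  have idem: "id_word w \<odot> id_word w = id_word w" "id_word u \<odot> id_word u = id_word u"
    using vcomp_id_word_left[OF cell_id_word] assms by auto
  have right: "hcomp K (x \<odot> y) (id_word w) = hcomp K x (id_word w) \<odot> hcomp K y (id_word w)"
    using interchange[of x y "id_word w" "id_word w"] idem assms by (simp add: id_word_def id2_dom id2_cod)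
  have "dom2 K (hcomp K x (id_word w)) = cod2 K (hcomp K y (id_word w))"
    "tgt K (dom2 K (hcomp K x (id_word w))) = A"
    using assms by (auto simp: hcomp_dom hcomp_cod comp1_tgt)
  then have "hcomp K (id_word u) (hcomp K x (id_word w) \<odot> hcomp K y (id_word w)) =
      hcomp K (id_word u) (hcomp K x (id_word w)) \<odot> hcomp K (id_word u) (hcomp K y (id_word w))"
    using interchange[of "id_word u" "id_word u" "hcomp K x (id_word w)" "hcomp K y (id_word w)"] idem assms
    by simp
  then show ?thesis unfolding whisk_def right .
qed

lemma whisk_vcomp_cell: "cell x D C \<Longrightarrow> cell y D' D \<Longrightarrow> endos u \<Longrightarrow>
  endos w \<Longrightarrow>
   whisk u (x \<odot> y) w = whisk u x w \<odot> whisk u y w"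
  unfolding cell_def by (intro whisk_vcomp) auto

lemma whisk_whisk:
  assumes x: "cell x D C" and "endos u" "endos w" "endos u'" "endos w'"
  shows "whisk u (whisk u' x w') w = whisk (u@u') x (w'@w)"
proof -
  have "hcomp K (hcomp K (id_word u') (hcomp K x (id_word w'))) (id_word w) =
      hcomp K (id_word u') (hcomp K (hcomp K x (id_word w')) (id_word w))"
    using assms by (intro hcomp_assoc_cell) (auto intro: cell_id_word cell_hcomp)
  also have "hcomp K (hcomp K x (id_word w')) (id_word w) = hcomp K x (id_word (w'@w))"
    using assms by (simp add: hcomp_assoc_cell[OF x cell_id_word cell_id_word] hcomp_id_word)
  finally have right: "hcomp K (hcomp K (id_word u') (hcomp K x (id_word w'))) (id_word w) =
      hcomp K (id_word u') (hcomp K x (id_word (w' @ w)))" .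
  have "cell (hcomp K x (id_word (w' @ w))) (D@w'@w) (C@w'@w)"
    using assms by (intro cell_hcomp cell_id_word) auto
  then have "hcomp K (id_word u) (hcomp K (id_word u') (hcomp K x (id_word (w' @ w)))) =
      hcomp K (hcomp K (id_word u) (id_word u')) (hcomp K x (id_word (w' @ w)))"
    using assms by (intro hcomp_assoc_cell[OF cell_id_word cell_id_word, symmetric])
  then show ?thesis unfolding whisk_def right using assms by (simp add: hcomp_id_word)
qed

lemma hcomp_eq_whisk_left_first:
  assumes x: "cell x D C" and y: "cell y D' C'"
  shows "hcomp K x y = whisk [] x C' \<odot> whisk D y []"
proof -
  have "endos D" "endos C'" using x y by (auto simp: cell_def)
  have "hcomp K x y = hcomp K (x \<odot> id_word D) (id_word C' \<odot> y)"
    using x y by (simp add: vcomp_id_word_left vcomp_id_word_right)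
  also have "\<dots> = hcomp K x (id_word C') \<odot> hcomp K (id_word D) y"
    using \<open>endos D\<close> \<open>endos C'\<close> by (intro interchange_cell[OF cell_id_word x y cell_id_word])
  finally show ?thesis
    using \<open>endos D\<close> \<open>endos C'\<close> x y by (simp add: hcomp_id_word_right hcomp_id_word_left)
qed

lemma hcomp_eq_whisk_right_first:
  assumes x: "cell x D C" and y: "cell y D' C'"
  shows "hcomp K x y = whisk C y [] \<odot> whisk [] x D'"
proof -
  have "endos C" "endos D'" using x y by (auto simp: cell_def)
  have "hcomp K x y = hcomp K (id_word C \<odot> x) (y \<odot> id_word D')"
    using x y by (simp add: vcomp_id_word_left vcomp_id_word_right)
  also have "\<dots> = hcomp K (id_word C) y \<odot> hcomp K x (id_word D')"
    using \<open>endos C\<close> \<open>endos D'\<close> by (intro interchange_cell[OF x cell_id_word cell_id_word y])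
  finally show ?thesis
    using \<open>endos C\<close> \<open>endos D'\<close> x y by (simp add: hcomp_id_word_right hcomp_id_word_left)
qed

text \<open>Both sides are the whiskered horizontal composite of a and b, split by the interchange
  law in the two possible ways.\<close>

lemma whisk_comm:
  assumes a: "cell a D1 C1" and b: "cell b D2 C2" and "endos u" "endos m" "endos w"
  shows "whisk u a (m@C2@w) \<odot> whisk (u@D1@m) b w = whisk (u@C1@m) b w \<odot> whisk u a (m@D2@w)"
proof -
  have "endos D1" "endos C1" "endos D2" "endos C2" using a b by (auto simp: cell_def)
  have mb: "cell (whisk m b []) (m@D2) (m@C2)" using cell_whisk[OF b \<open>endos m\<close>, of "[]"] by simp
  have "whisk u (hcomp K a (whisk m b [])) w = whisk u a (m@C2@w) \<odot> whisk (u@D1@m) b w"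
    using assms mb \<open>endos D1\<close> \<open>endos C2\<close> cell_whisk[OF a, of "[]" "m@C2"] cell_whisk[OF b, of
      "D1@m" "[]"]
    by (simp add: hcomp_eq_whisk_left_first[OF a mb] whisk_vcomp_cell[where D="D1@m@C2"] whisk_whisk)
  moreover have "whisk u (hcomp K a (whisk m b [])) w = whisk (u@C1@m) b w \<odot> whisk u a (m@D2@w)"
    using assms mb \<open>endos C1\<close> \<open>endos D2\<close> cell_whisk[OF a, of "[]" "m@D2"] cell_whisk[OF b, of
      "C1@m" "[]"]
    by (simp add: hcomp_eq_whisk_right_first[OF a mb] whisk_vcomp_cell[where D="C1@m@D2"] whisk_whisk)
  ultimately show ?thesis by simp
qed

lemma whisk_comm_chain:
  assumes a: "cell a D1 C1" and b: "cell b D2 C2" and "endos u" "endos m" "endos w"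
    and r: "cod2 K r = comp_word (u@D1@m@D2@w)"
  shows "whisk u a (m@C2@w) \<odot> (whisk (u@D1@m) b w \<odot> r) = whisk (u@C1@m) b w \<odot> (whisk u a (m@D2@w) \<odot> r)"
proof -
  have "endos D1" "endos C1" "endos D2" "endos C2" using a b by (auto simp: cell_def)
  then have cells: "cell (whisk (u@C1@m) b w) (u@C1@m@D2@w) (u@C1@m@C2@w)"
    "cell (whisk u a (m@D2@w)) (u@D1@m@D2@w) (u@C1@m@D2@w)"
    "cell (whisk u a (m@C2@w)) (u@D1@m@C2@w) (u@C1@m@C2@w)"
    "cell (whisk (u@D1@m) b w) (u@D1@m@D2@w) (u@D1@m@C2@w)"
    using assms cell_whisk[OF b, of "u@C1@m" w] cell_whisk[OF a, of u "m@D2@w"]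
      cell_whisk[OF a, of u "m@C2@w"] cell_whisk[OF b, of "u@D1@m" w] by auto
  then show ?thesis
    using whisk_comm[OF assms(1-5)] r vcomp_assoc unfolding cell_def by (metis vcomp_cod vcomp_dom)
qed

declare vcomp_dom[simp] vcomp_cod[simp]

end

section \<open>Rewriting chains of atoms\<close>

context endo_2cat
begin

text \<open>An atom is a whiskered 2-cell that remembers the words it acts on, so that the rewrite
  rules below can be applied by the simplifier, which checks the side conditions on words. All
  composites are kept as right-nested chains a1 \<odot> (a2 \<odot> (\<dots> \<odot> r)) whose tail r has a known
  codomain; an equation x = y is obtained from x \<odot> id_word X = y \<odot> id_word X.\<close>

definition atom :: "'m list \<Rightarrow> 'm list \<Rightarrow> 'c \<Rightarrow> 'm list \<Rightarrow> 'm list \<Rightarrow> 'c"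
  where "atom u D g C w = whisk u g w"

definition idem_atom :: "'m list \<Rightarrow> 'm \<Rightarrow> 'c \<Rightarrow> 'm list \<Rightarrow> 'c" where
  "idem_atom u x e w = whisk u e w"

lemma atom_dom[simp]: "cell g D C \<Longrightarrow> endos u \<Longrightarrow> endos w \<Longrightarrow>
  dom2 K (atom u D g C w) = comp_word (u@D@w)"
  and atom_cod[simp]: "cell g D C \<Longrightarrow> endos u \<Longrightarrow> endos w \<Longrightarrow>
    cod2 K (atom u D g C w) = comp_word (u@C@w)"
  using cell_whisk unfolding atom_def cell_def by blast+

lemma idem_atom_dom[simp]:
    "cell e [x] [x] \<Longrightarrow> endos u \<Longrightarrow> endos w \<Longrightarrow>
      dom2 K (idem_atom u x e w) = comp_word (u@x#w)"
  and idem_atom_cod[simp]: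
    "cell e [x] [x] \<Longrightarrow> endos u \<Longrightarrow> endos w \<Longrightarrow>
      cod2 K (idem_atom u x e w) = comp_word (u@x#w)"
  using cell_whisk[of e "[x]" "[x]" u w] unfolding idem_atom_def cell_def by auto

lemma atom_Nil: "cell g D C \<Longrightarrow> atom [] D g C [] = g"
  unfolding atom_def by (rule whisk_Nil)

lemma idem_atom_Nil: "cell e [x] [x] \<Longrightarrow> idem_atom [] x e [] = e"
  unfolding idem_atom_def by (rule whisk_Nil)

lemma whisk_atom: "cell g D C \<Longrightarrow> endos u \<Longrightarrow> endos w \<Longrightarrow>
  endos u' \<Longrightarrow> endos w' \<Longrightarrow>
   whisk u (atom u' D g C w') w = atom (u@u') D g C (w'@w)"
  unfolding atom_def by (rule whisk_whisk)

lemma whisk_idem_atom: "cell e [x] [x] \<Longrightarrow> endos u \<Longrightarrow> endos w \<Longrightarrow>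
  endos u' \<Longrightarrow> endos w' \<Longrightarrow>
   whisk u (idem_atom u' x e w') w = idem_atom (u@u') x e (w'@w)"
  unfolding idem_atom_def by (rule whisk_whisk)

lemmas chain_simps = whisk_vcomp whisk_atom whisk_idem_atom whisk_id_word vcomp_assoc

text \<open>In the commutation rules the word between the two atoms is computed by drop, so that
  the simplifier can instantiate it on concrete words.\<close>

lemma atom_commL:
  assumes "cell a D1 C1" "cell b D2 C2" "endos u1" "endos w1" "endos u2" "endos w2"
    and "u2 = u1 @ D1 @ drop (length u1 + length D1) u2"
    and "w1 = drop (length u1 + length D1) u2 @ C2 @ w2"
    and "cod2 K r = comp_word (u2@D2@w2)"
  shows "atom u1 D1 a C1 w1 \<odot> (atom u2 D2 b C2 w2 \<odot> r) =
    atom (u1@C1@drop (length u1 + length D1) u2) D2 b C2 w2 \<odot>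
      (atom u1 D1 a C1 (drop (length u1 + length D1) u2@D2@w2) \<odot> r)"
  using whisk_comm_chain[OF assms(1-3) endos_drop[OF assms(5)] assms(6), of r] assms(7-9)
  unfolding atom_def by (metis append.assoc)

lemma atom_commR:
  assumes "cell a D1 C1" "cell b D2 C2" "endos u1" "endos w1" "endos u2" "endos w2"
    and "u1 = u2 @ C2 @ drop (length u2 + length C2) u1"
    and "w2 = drop (length u2 + length C2) u1 @ D1 @ w1"
    and "cod2 K r = comp_word (u2@D2@w2)"
  shows "atom u1 D1 a C1 w1 \<odot> (atom u2 D2 b C2 w2 \<odot> r) =
    atom u2 D2 b C2 (drop (length u2 + length C2) u1 @ C1 @ w1) \<odot>
      (atom (u2@D2@drop (length u2 + length C2) u1) D1 a C1 w1 \<odot> r)"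
  using whisk_comm_chain[OF assms(2,1,5) endos_drop[OF assms(3)] assms(4), of r] assms(7-9)
  unfolding atom_def by (metis append.assoc)

lemma idem_up_left:
  assumes "cell a D1 C1" "cell e [x] [x]" "endos u1" "endos w1" "endos u2" "endos w2"
    and "u2 = u1 @ D1 @ drop (length u1 + length D1) u2"
    and "w1 = drop (length u1 + length D1) u2 @ x # w2"
    and "cod2 K r = comp_word (u2@x#w2)"
  shows "atom u1 D1 a C1 w1 \<odot> (idem_atom u2 x e w2 \<odot> r) =
    idem_atom (u1@C1@drop (length u1 + length D1) u2) x e w2 \<odot>
      (atom u1 D1 a C1 (drop (length u1 + length D1) u2 @ x # w2) \<odot> r)"
  using whisk_comm_chain[OF assms(1-3) endos_drop[OF assms(5)] assms(6), of r] assms(7-9)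
  unfolding atom_def idem_atom_def by (metis append.assoc append_Cons append_Nil)

lemma idem_up_right:
  assumes "cell b D1 C1" "cell e [x] [x]" "endos u1" "endos w1" "endos u2" "endos w2"
    and "u1 = u2 @ x # drop (Suc (length u2)) u1"
    and "w2 = drop (Suc (length u2)) u1 @ D1 @ w1"
    and "cod2 K r = comp_word (u2@x#w2)"
  shows "atom u1 D1 b C1 w1 \<odot> (idem_atom u2 x e w2 \<odot> r) =
    idem_atom u2 x e (drop (Suc (length u2)) u1 @ C1 @ w1) \<odot> (atom u1 D1 b C1 w1 \<odot> r)"
  using whisk_comm_chain[OF assms(2,1,5) endos_drop[OF assms(3)] assms(4), of r] assms(7-9)
  unfolding atom_def idem_atom_def by (metis append.assoc append_Cons append_Nil)

lemma idem_down_left: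
  assumes "cell b D2 C2" "cell e [x] [x]" "endos u1" "endos w1" "endos u2" "endos w2"
    and "u2 = u1 @ x # drop (Suc (length u1)) u2"
    and "w1 = drop (Suc (length u1)) u2 @ C2 @ w2"
    and "cod2 K r = comp_word (u2@D2@w2)"
  shows "idem_atom u1 x e w1 \<odot> (atom u2 D2 b C2 w2 \<odot> r) =
    atom u2 D2 b C2 w2 \<odot> (idem_atom u1 x e (drop (Suc (length u1)) u2 @ D2 @ w2) \<odot> r)"
  using whisk_comm_chain[OF assms(2,1,3) endos_drop[OF assms(5)] assms(6), of r] assms(7-9)
  unfolding atom_def idem_atom_def by (metis append.assoc append_Cons append_Nil)

lemma idem_down_right:
  assumes "cell b D2 C2" "cell e [x] [x]" "endos u1" "endos w1" "endos u2" "endos w2"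
    and "u1 = u2 @ C2 @ drop (length u2 + length C2) u1"
    and "w2 = drop (length u2 + length C2) u1 @ x # w1"
    and "cod2 K r = comp_word (u2@D2@w2)"
  shows "idem_atom u1 x e w1 \<odot> (atom u2 D2 b C2 w2 \<odot> r) =
    atom u2 D2 b C2 w2 \<odot> (idem_atom (u2 @ D2 @ drop (length u2 + length C2) u1) x e w1 \<odot> r)"
  using whisk_comm_chain[OF assms(1,2,5) endos_drop[OF assms(3)] assms(4), of r] assms(7-9)
  unfolding atom_def idem_atom_def by (metis append.assoc append_Cons append_Nil)

lemma idem_atom_comm:
  assumes "cell e [x] [x]" "cell e' [y] [y]" "endos u1" "endos w1" "endos u2" "endos w2"
    and "u2 = u1 @ x # drop (Suc (length u1)) u2"
    and "w1 = drop (Suc (length u1)) u2 @ y # w2"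
    and "cod2 K r = comp_word (u2@y#w2)"
  shows "idem_atom u1 x e w1 \<odot> (idem_atom u2 y e' w2 \<odot> r) =
    idem_atom u2 y e' w2 \<odot> (idem_atom u1 x e (drop (Suc (length u1)) u2 @ y # w2) \<odot> r)"
  using whisk_comm_chain[OF assms(1-3) endos_drop[OF assms(5)] assms(6), of r] assms(7-9)
  unfolding idem_atom_def by (metis append.assoc append_Cons append_Nil)

definition absorbs_cod :: "'c \<Rightarrow> 'm list \<Rightarrow> nat \<Rightarrow> 'c \<Rightarrow> bool" where
  "absorbs_cod g C k e \<longleftrightarrow> whisk (take k C) e (drop (Suc k) C) \<odot> g = g"

definition absorbs_dom :: "'c \<Rightarrow> 'm list \<Rightarrow> nat \<Rightarrow> 'c \<Rightarrow> bool" where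
  "absorbs_dom g D k e \<longleftrightarrow> g \<odot> whisk (take k D) e (drop (Suc k) D) = g"

lemma idem_absorb_cod:
  assumes g: "cell g D C" and e: "cell e [x] [x]" and "endos u" "endos w"
    and u': "u' = u @ take (length u' - length u) C"
    and w': "w' = drop (Suc (length u' - length u)) C @ w"
    and C: "take (length u' - length u) C @ x # drop (Suc (length u' - length u)) C = C"
    and abs: "absorbs_cod g C (length u' - length u) e" and r: "cod2 K r = comp_word (u@D@w)"
  shows "idem_atom u' x e w' \<odot> (atom u D g C w \<odot> r) = atom u D g C w \<odot> r"
proof -
  define k where "k = length u' - length u"
  define ek where "ek = whisk (take k C) e (drop (Suc k) C)"
  have "endos C" using g by (simp add: cell_def)
  then have ek: "cell ek C C"
    using cell_whisk[OF e endos_take[OF \<open>endos C\<close>, of k] endos_drop[OF \<open>endos C\<close>, of "Suc k"]] C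
    unfolding ek_def k_def by simp
  have G: "idem_atom u' x e w' = whisk u ek w"
    using u' w' whisk_whisk[OF e _ _ endos_take endos_drop] \<open>endos C\<close> assms(3,4)
    unfolding idem_atom_def ek_def k_def by simp
  have "idem_atom u' x e w' \<odot> (atom u D g C w \<odot> r) = (whisk u ek w \<odot> atom u D g C w) \<odot> r"
    unfolding G using ek g assms(3,4) r cell_whisk[OF ek] by (simp add: vcomp_assoc cell_def)
  also have "whisk u ek w \<odot> atom u D g C w = atom u D g C w"
    using whisk_vcomp_cell[OF ek g assms(3,4)] abs unfolding atom_def absorbs_cod_def ek_def k_def by simp
  finally show ?thesis .
qed

lemma idem_absorb_dom:
  assumes g: "cell g D C" and e: "cell e [x] [x]" and "endos u" "endos w"
    and u': "u' = u @ take (length u' - length u) D"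
    and w': "w' = drop (Suc (length u' - length u)) D @ w"
    and D: "take (length u' - length u) D @ x # drop (Suc (length u' - length u)) D = D"
    and abs: "absorbs_dom g D (length u' - length u) e" and r: "cod2 K r = comp_word (u@D@w)"
  shows "atom u D g C w \<odot> (idem_atom u' x e w' \<odot> r) = atom u D g C w \<odot> r"
proof -
  define k where "k = length u' - length u"
  define ek where "ek = whisk (take k D) e (drop (Suc k) D)"
  have "endos D" using g by (simp add: cell_def)
  then have ek: "cell ek D D"
    using cell_whisk[OF e endos_take[OF \<open>endos D\<close>, of k] endos_drop[OF \<open>endos D\<close>, of "Suc k"]] D
    unfolding ek_def k_def by simp
  have G: "idem_atom u' x e w' = whisk u ek w"
    using u' w' whisk_whisk[OF e _ _ endos_take endos_drop] \<open>endos D\<close> assms(3,4)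
    unfolding idem_atom_def ek_def k_def by simp
  have "atom u D g C w \<odot> (idem_atom u' x e w' \<odot> r) = (atom u D g C w \<odot> whisk u ek w) \<odot> r"
    unfolding G using ek g assms(3,4) r cell_whisk[OF ek] by (simp add: vcomp_assoc cell_def)
  also have "atom u D g C w \<odot> whisk u ek w = atom u D g C w"
    using whisk_vcomp_cell[OF g ek assms(3,4)] abs unfolding atom_def absorbs_dom_def ek_def k_def by simp
  finally show ?thesis .
qed

lemma idem_atom_idem:
  assumes e: "cell e [x] [x]" "e \<odot> e = e" and "endos u" "endos w" "cod2 K r = comp_word (u@x#w)"
  shows "idem_atom u x e w \<odot> (idem_atom u x e w \<odot> r) = idem_atom u x e w \<odot> r"
proof -
  have "idem_atom u x e w \<odot> (idem_atom u x e w \<odot> r) = (idem_atom u x e w \<odot> idem_atom u x e w) \<odot> r"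
    using assms by (intro vcomp_assoc[symmetric]) (auto simp: cell_def)
  also have "idem_atom u x e w \<odot> idem_atom u x e w = idem_atom u x e w"
    unfolding idem_atom_def using whisk_vcomp_cell[OF e(1) e(1) assms(3,4)] e(2) by simp
  finally show ?thesis .
qed

lemmas up_rules = idem_up_left idem_up_right idem_atom_comm idem_absorb_dom idem_absorb_cod idem_atom_idem
lemmas down_rules = idem_down_left idem_down_right idem_atom_comm idem_absorb_dom idem_absorb_cod idem_atom_idem

lemma vcomp_absorb_right:
  assumes "cell p D C" "cell a D D" "cell b D D" "a \<odot> a = a" "p \<odot> (b \<odot> a) = p"
  shows "p \<odot> a = p"
proof -
  have "p \<odot> a = (p \<odot> (b \<odot> a)) \<odot> a" using assms(5) by simp
  also have "\<dots> = p \<odot> (b \<odot> (a \<odot> a))"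
    using vcomp_assoc_cell[OF assms(1) cell_vcomp[OF assms(3,2)] assms(2)] vcomp_assoc_cell[OF assms(3,2,2)]
    by simp
  finally show ?thesis using assms(4,5) by simp
qed

lemma vcomp_absorb_left:
  assumes "cell p D C" "cell a C C" "cell b C C" "a \<odot> a = a" "(a \<odot> b) \<odot> p = p"
  shows "a \<odot> p = p"
proof -
  have "a \<odot> p = a \<odot> ((a \<odot> b) \<odot> p)" using assms(5) by simp
  also have "\<dots> = ((a \<odot> a) \<odot> b) \<odot> p"
    using vcomp_assoc_cell[OF assms(2) cell_vcomp[OF assms(2,3)] assms(1)] vcomp_assoc_cell[OF assms(2,2,3)]
    by simp
  finally show ?thesis using assms(4,5) by simp
qed

lemma hcomp_idem_absorb_dom:
  assumes p: "cell p (X@Y) Z" and e1: "cell e1 X X" "e1 \<odot> e1 = e1" and e2: "cell e2 Y Y" "e2 \<odot> e2 = e2"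
    and "p \<odot> hcomp K e1 e2 = p"
  shows "p \<odot> whisk [] e1 Y = p \<and> p \<odot> whisk X e2 [] = p"
proof -
  have "endos X" "endos Y" using e1 e2 cell_endos by auto
  then have w: "cell (whisk [] e1 Y) (X@Y) (X@Y)" "cell (whisk X e2 []) (X@Y) (X@Y)"
    "whisk [] e1 Y \<odot> whisk [] e1 Y = whisk [] e1 Y" "whisk X e2 [] \<odot> whisk X e2 [] = whisk X e2 []"
    using cell_whisk[OF e1(1), of "[]" Y] cell_whisk[OF e2(1), of X "[]"]
      whisk_vcomp_cell[OF e1(1) e1(1), of "[]" Y] whisk_vcomp_cell[OF e2(1) e2(1), of X "[]"] e1(2) e2(2)
    by auto
  show ?thesis
    using vcomp_absorb_right[OF p w(1,2,3)] vcomp_absorb_right[OF p w(2,1,4)] assms(6)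
      hcomp_eq_whisk_left_first[OF e1(1) e2(1)] hcomp_eq_whisk_right_first[OF e1(1) e2(1)]
    by simp
qed

lemma hcomp_idem_absorb_cod:
  assumes p: "cell p Z (X@Y)" and e1: "cell e1 X X" "e1 \<odot> e1 = e1" and e2: "cell e2 Y Y" "e2 \<odot> e2 = e2"
    and "hcomp K e1 e2 \<odot> p = p"
  shows "whisk [] e1 Y \<odot> p = p \<and> whisk X e2 [] \<odot> p = p"
proof -
  have "endos X" "endos Y" using e1 e2 cell_endos by auto
  then have w: "cell (whisk [] e1 Y) (X@Y) (X@Y)" "cell (whisk X e2 []) (X@Y) (X@Y)"
    "whisk [] e1 Y \<odot> whisk [] e1 Y = whisk [] e1 Y" "whisk X e2 [] \<odot> whisk X e2 [] = whisk X e2 []"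
    using cell_whisk[OF e1(1), of "[]" Y] cell_whisk[OF e2(1), of X "[]"]
      whisk_vcomp_cell[OF e1(1) e1(1), of "[]" Y] whisk_vcomp_cell[OF e2(1) e2(1), of X "[]"] e1(2) e2(2)
    by auto
  show ?thesis
    using vcomp_absorb_left[OF p w(1,2,3)] vcomp_absorb_left[OF p w(2,1,4)] assms(6)
      hcomp_eq_whisk_left_first[OF e1(1) e2(1)] hcomp_eq_whisk_right_first[OF e1(1) e2(1)]
    by simp
qed

end
section \<open>Monads in the local idempotent closure\<close>

locale cl_mon = endo_2cat K A for K :: "('o,'m,'c) twocat" and A +
  fixes t :: 'm and tb mu eta :: 'c
  assumes monad: "cl_monad K A t tb mu eta"
begin

lemma endo_t[simp]: "endo t"
  using monad unfolding cl_monad_def endo_def by auto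

lemma cell_tb[simp]: "cell tb [t] [t]"
  using monad unfolding cl_monad_def idem_2cell_def cell_def by (simp add: comp_word_single)

lemma cell_mu[simp]: "cell mu [t,t] [t]"
  using monad unfolding cl_monad_def cl_2cell_def cell_def by (simp add: comp_word_single comp_word_two)

lemma cell_eta[simp]: "cell eta [] [t]"
  using monad unfolding cl_monad_def cl_2cell_def cell_def by (simp add: comp_word_single comp_word_Nil)

lemma tb_idem[simp]: "tb \<odot> tb = tb"
  using monad unfolding cl_monad_def idem_2cell_def by auto

lemma mu_absorbs_tb: "mu \<odot> whisk [] tb [t] = mu \<and> mu \<odot> whisk [t] tb [] = mu"
  using monad unfolding cl_monad_def cl_2cell_def by (intro hcomp_idem_absorb_dom[where Z="[t]"]) auto

lemma mon_absorbs[simp]: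
  "absorbs_dom mu [t,t] 0 tb" "absorbs_dom mu [t,t] (Suc 0) tb" "absorbs_cod mu [t] 0 tb"
  "absorbs_cod eta [t] 0 tb" "absorbs_dom tb [t] 0 tb" "absorbs_cod tb [t] 0 tb"
  using mu_absorbs_tb monad unfolding absorbs_dom_def absorbs_cod_def cl_monad_def cl_2cell_def
  by (auto simp: whisk_Nil[OF cell_tb])

lemma mu_hcomp_tb:
  assumes x: "cell x D [t]"
  shows "mu \<odot> hcomp K x tb = mu \<odot> whisk [] x [t]" "mu \<odot> hcomp K tb x = mu \<odot> whisk [t] x []"
proof -
  have "endos D" using x by (simp add: cell_def)
  then have xr: "cell (whisk [] x [t]) (D@[t]) [t,t]" and xl: "cell (whisk [t] x []) (t#D) [t,t]"
    using cell_whisk[OF x, of "[]" "[t]"] cell_whisk[OF x, of "[t]" "[]"] by auto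
  have tr: "cell (whisk [t] tb []) [t,t] [t,t]" and tl: "cell (whisk [] tb [t]) [t,t] [t,t]"
    using cell_whisk[OF cell_tb, of "[t]" "[]"] cell_whisk[OF cell_tb, of "[]" "[t]"] by auto
  show "mu \<odot> hcomp K x tb = mu \<odot> whisk [] x [t]"
    unfolding hcomp_eq_whisk_right_first[OF x cell_tb] vcomp_assoc_cell[OF cell_mu tr xr, symmetric]
    using mu_absorbs_tb by simp
  show "mu \<odot> hcomp K tb x = mu \<odot> whisk [t] x []"
    unfolding hcomp_eq_whisk_left_first[OF cell_tb x] vcomp_assoc_cell[OF cell_mu tl xl, symmetric]
    using mu_absorbs_tb by simp
qed

text \<open>Each equation between atom chains is proved once without context (the lemmas _atom) and then
  whiskered into an arbitrary context u, w above an arbitrary tail r (the lemmas _chain).\<close>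

lemma mu_assoc_atom:
  "atom [] [t,t] mu [t] [] \<odot> atom [] [t,t] mu [t] [t] = atom [] [t,t] mu [t] [] \<odot> atom [t] [t,t] mu [t] []"
proof -
  have "mu \<odot> whisk [] mu [t] = mu \<odot> whisk [t] mu []"
    using monad mu_hcomp_tb[OF cell_mu] unfolding cl_monad_def by simp
  then show ?thesis unfolding atom_Nil[OF cell_mu] by (simp add: atom_def)
qed

lemma mu_unit_right_atom: "atom [] [t,t] mu [t] [] \<odot> atom [t] [] eta [t] [] = idem_atom [] t tb []"
  using monad mu_hcomp_tb(2)[OF cell_eta] unfolding cl_monad_def atom_Nil[OF cell_mu] idem_atom_Nil[OF cell_tb]
  by (simp add: atom_def)

lemma mu_unit_left_atom: "atom [] [t,t] mu [t] [] \<odot> atom [] [] eta [t] [t] = idem_atom [] t tb []"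
  using monad mu_hcomp_tb(1)[OF cell_eta] unfolding cl_monad_def atom_Nil[OF cell_mu] idem_atom_Nil[OF cell_tb]
  by (simp add: atom_def)

lemma mu_assoc_chain:
  "u' = u @ [t] \<Longrightarrow> w' = w \<Longrightarrow> endos u \<Longrightarrow> endos w \<Longrightarrow>
    cod2 K r = comp_word (u@[t,t,t]@w) \<Longrightarrow>
   atom u [t,t] mu [t] w \<odot> (atom u' [t,t] mu [t] w' \<odot> r) = atom u [t,t] mu [t] w
     \<odot> (atom u [t,t] mu [t] (t#w) \<odot> r)"
  using arg_cong[OF mu_assoc_atom, of "\<lambda>X. whisk u X w \<odot> r"] by (simp add: chain_simps)

lemma mu_assoc_chain':
  "u' = u \<Longrightarrow> w' = t#w \<Longrightarrow> endos u \<Longrightarrow> endos w \<Longrightarrow>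
    cod2 K r = comp_word (u@[t,t,t]@w) \<Longrightarrow>
   atom u [t,t] mu [t] w \<odot> (atom u' [t,t] mu [t] w' \<odot> r) = atom u [t,t] mu [t] w
     \<odot> (atom (u@[t]) [t,t] mu [t] w \<odot> r)"
  using arg_cong[OF mu_assoc_atom, of "\<lambda>X. whisk u X w \<odot> r"] by (simp add: chain_simps)

lemma mu_unit_right_chain:
  "u' = u @ [t] \<Longrightarrow> w' = w \<Longrightarrow> endos u \<Longrightarrow> endos w \<Longrightarrow>
    cod2 K r = comp_word (u@[t]@w) \<Longrightarrow>
   atom u [t,t] mu [t] w \<odot> (atom u' [] eta [t] w' \<odot> r) = idem_atom u t tb w \<odot> r"
  using arg_cong[OF mu_unit_right_atom, of "\<lambda>X. whisk u X w \<odot> r"] by (simp add: chain_simps)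

lemma mu_unit_left_chain:
  "u' = u \<Longrightarrow> w' = t#w \<Longrightarrow> endos u \<Longrightarrow> endos w \<Longrightarrow>
    cod2 K r = comp_word (u@[t]@w) \<Longrightarrow>
   atom u [t,t] mu [t] w \<odot> (atom u' [] eta [t] w' \<odot> r) = idem_atom u t tb w \<odot> r"
  using arg_cong[OF mu_unit_left_atom, of "\<lambda>X. whisk u X w \<odot> r"] by (simp add: chain_simps)

end

section \<open>Weak distributive laws in the local idempotent closure\<close>

locale cl_wdl_law = endo_2cat K A + T: cl_mon K A t tb mut etat + S: cl_mon K A s sb mus etas
  for K :: "('o,'m,'c) twocat" and A t tb mut etat s sb mus etas +
  fixes l :: 'c
  assumes law: "cl_wdl K A t tb mut etat s sb mus etas l"
begin

lemma cell_l[simp]: "cell l [t,s] [s,t]"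
  using law unfolding cl_wdl_def cl_2cell_def cell_def by (simp add: comp_word_two)

lemma l_absorbs_idem:
  "l \<odot> whisk [] tb [s] = l \<and> l \<odot> whisk [t] sb [] = l"
  "whisk [] sb [t] \<odot> l = l \<and> whisk [s] tb [] \<odot> l = l"
  using law unfolding cl_wdl_def cl_2cell_def
  by (intro hcomp_idem_absorb_dom[where Z="[s,t]"] hcomp_idem_absorb_cod[where Z="[t,s]"]; simp)+

lemma l_absorbs[simp]:
  "absorbs_dom l [t,s] 0 tb" "absorbs_dom l [t,s] (Suc 0) sb"
  "absorbs_cod l [s,t] 0 sb" "absorbs_cod l [s,t] (Suc 0) tb"
  using l_absorbs_idem unfolding absorbs_dom_def absorbs_cod_def by auto

lemmas fold_atoms = atom_def[of _ "[t,t]" mut "[t]", symmetric] atom_def[of _ "[]" etat "[t]", symmetric]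
  atom_def[of _ "[s,s]" mus "[s]", symmetric] atom_def[of _ "[]" etas "[s]", symmetric]
  atom_def[of _ "[t,s]" l "[s,t]", symmetric] idem_atom_def[of _ t tb, symmetric] idem_atom_def[of _ s sb, symmetric]

abbreviation "MT u w \<equiv> atom u [t,t] mut [t] w"
abbreviation "HT u w \<equiv> atom u [] etat [t] w"
abbreviation "MS u w \<equiv> atom u [s,s] mus [s] w"
abbreviation "HS u w \<equiv> atom u [] etas [s] w"
abbreviation "LL u w \<equiv> atom u [t,s] l [s,t] w"

lemma law_axioms: "l \<odot> hcomp K mut sb = hcomp K sb mut \<odot> (hcomp K l tb \<odot> hcomp K tb l)"
  "l \<odot> hcomp K tb mus = hcomp K mus tb \<odot> (hcomp K sb l \<odot> hcomp K l sb)"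
  "l \<odot> hcomp K etat sb = hcomp K mus tb \<odot> (hcomp K sb l \<odot> (hcomp K (hcomp K sb tb) etas
    \<odot> hcomp K sb etat))"
  "l \<odot> hcomp K tb etas = hcomp K sb mut \<odot> (hcomp K l tb \<odot> (hcomp K etat (hcomp K sb tb)
    \<odot> hcomp K etas tb))"
  using law unfolding cl_wdl_def by auto

lemma l_mut_atom: "LL [] [] \<odot> (MT [] [s] \<odot> id_word [t,t,s]) =
   MT [s] [] \<odot> (LL [] [t] \<odot> (LL [t] [] \<odot> id_word [t,t,s]))"
proof -
  have "(whisk [] l [] \<odot> hcomp K mut sb) \<odot> id_word [t,t,s] = (hcomp K sb mut \<odot> (hcomp K l tb
    \<odot> hcomp K tb l)) \<odot> id_word [t,t,s]"
    using law_axioms(1) whisk_Nil[OF cell_l] by simp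
  then show ?thesis
    unfolding hcomp_eq_whisk_left_first[OF T.cell_mu S.cell_tb] hcomp_eq_whisk_right_first[OF S.cell_tb T.cell_mu]
      hcomp_eq_whisk_right_first[OF cell_l T.cell_tb] hcomp_eq_whisk_left_first[OF T.cell_tb cell_l]
    by (simp add: fold_atoms chain_simps; (simp add: up_rules)?; (simp add: down_rules)?)
qed

lemma hcomp_sb_tb_etas: "hcomp K (hcomp K sb tb) etas = HS [s,t] [] \<odot> (idem_atom [] s sb [t] \<odot> idem_atom [s] t tb [])"
  unfolding hcomp_eq_whisk_right_first[OF cell_hcomp[OF S.cell_tb T.cell_tb] S.cell_eta]
    whisk_Nil[OF cell_hcomp[OF S.cell_tb T.cell_tb]]
  unfolding hcomp_eq_whisk_left_first[OF S.cell_tb T.cell_tb] by (simp add: fold_atoms)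

lemma hcomp_etat_sb_tb: "hcomp K etat (hcomp K sb tb) = idem_atom [t] s sb [t] \<odot> (idem_atom [t,s] t tb []
  \<odot> HT [] [s,t])"
proof -
  have "hcomp K etat (hcomp K sb tb) = whisk [t] (hcomp K sb tb) [] \<odot> whisk [] etat [s,t]"
    using hcomp_eq_whisk_right_first[OF T.cell_eta cell_hcomp[OF S.cell_tb T.cell_tb]] by simp
  then show ?thesis unfolding hcomp_eq_whisk_left_first[OF S.cell_tb T.cell_tb] by (simp add: fold_atoms chain_simps)
qed

lemma l_mus_atom: "LL [] [] \<odot> (MS [t] [] \<odot> id_word [t,s,s]) =
   MS [] [t] \<odot> (LL [s] [] \<odot> (LL [] [s] \<odot> id_word [t,s,s]))"
proof -
  have "(whisk [] l [] \<odot> hcomp K tb mus) \<odot> id_word [t,s,s] = (hcomp K mus tb \<odot> (hcomp K sb l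
    \<odot> hcomp K l sb)) \<odot> id_word [t,s,s]"
    using law_axioms(2) whisk_Nil[OF cell_l] by simp
  then show ?thesis
    unfolding hcomp_eq_whisk_left_first[OF T.cell_tb S.cell_mu] hcomp_eq_whisk_right_first[OF S.cell_mu T.cell_tb]
      hcomp_eq_whisk_right_first[OF S.cell_tb cell_l] hcomp_eq_whisk_left_first[OF cell_l S.cell_tb]
    by (simp add: fold_atoms chain_simps; (simp add: up_rules)?; (simp add: down_rules)?)
qed

lemma l_etat_atom: "LL [] [] \<odot> (HT [] [s] \<odot> id_word [s]) =
   MS [] [t] \<odot> (LL [s] [] \<odot> (HS [s,t] [] \<odot> (HT [s] [] \<odot> id_word [s])))"
proof -
  have "(whisk [] l [] \<odot> hcomp K etat sb) \<odot> id_word [s] = (hcomp K mus tb \<odot> (hcomp K sb l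
    \<odot> (hcomp K (hcomp K sb tb) etas \<odot> hcomp K sb etat))) \<odot> id_word [s]"
    using law_axioms(3) whisk_Nil[OF cell_l] by simp
  then show ?thesis
    unfolding hcomp_sb_tb_etas hcomp_eq_whisk_right_first[OF T.cell_eta S.cell_tb]
      hcomp_eq_whisk_right_first[OF S.cell_mu T.cell_tb] hcomp_eq_whisk_right_first[OF S.cell_tb cell_l] hcomp_eq_whisk_right_first[OF S.cell_tb T.cell_eta]
    by (simp add: fold_atoms chain_simps; (simp add: up_rules)?; (simp add: down_rules)?)
qed

lemma l_etas_atom: "LL [] [] \<odot> (HS [t] [] \<odot> id_word [t]) =
   MT [s] [] \<odot> (LL [] [t] \<odot> (HT [] [s,t] \<odot> (HS [] [t] \<odot> id_word [t])))"
proof -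
  have "(whisk [] l [] \<odot> hcomp K tb etas) \<odot> id_word [t] = (hcomp K sb mut \<odot> (hcomp K l tb
    \<odot> (hcomp K etat (hcomp K sb tb) \<odot> hcomp K etas tb))) \<odot> id_word [t]"
    using law_axioms(4) whisk_Nil[OF cell_l] by simp
  then show ?thesis
    unfolding hcomp_etat_sb_tb hcomp_eq_whisk_left_first[OF T.cell_tb S.cell_eta]
      hcomp_eq_whisk_right_first[OF S.cell_tb T.cell_mu] hcomp_eq_whisk_right_first[OF cell_l T.cell_tb] hcomp_eq_whisk_right_first[OF S.cell_eta T.cell_tb]
    by (simp add: fold_atoms chain_simps; (simp add: up_rules)?; (simp add: down_rules)?)
qed

definition lbar :: 'c where "lbar = wdl_idem K tb sb mus etas l"

text \<open>The second expression for the idempotent of the law; the two agree by wdl_idem_alt below.\<close>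

definition lbar_alt :: 'c where
  "lbar_alt = hcomp K sb mut \<odot> (hcomp K l tb \<odot> hcomp K etat (hcomp K sb tb))"

lemma lbar_chain: "lbar \<odot> id_word [s,t] = MS [] [t] \<odot> (LL [s] [] \<odot> (HS [s,t] [] \<odot> id_word [s,t]))"
  unfolding lbar_def wdl_idem_def hcomp_sb_tb_etas hcomp_eq_whisk_right_first[OF S.cell_mu T.cell_tb]
    hcomp_eq_whisk_right_first[OF S.cell_tb cell_l]
  by (simp add: fold_atoms chain_simps; (simp add: up_rules)?; (simp add: down_rules)?)

lemma lbar_alt_chain: "lbar_alt \<odot> id_word [s,t] = MT [s] [] \<odot> (LL [] [t] \<odot> (HT [] [s,t] \<odot> id_word [s,t]))"
  unfolding lbar_alt_def hcomp_etat_sb_tb hcomp_eq_whisk_right_first[OF S.cell_tb T.cell_mu]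
    hcomp_eq_whisk_right_first[OF cell_l T.cell_tb]
  by (simp add: fold_atoms chain_simps; (simp add: up_rules)?; (simp add: down_rules)?)

lemma l_mut_chain: "endos u \<Longrightarrow> endos w \<Longrightarrow> cod2 K r = comp_word (u@[t,t,s]@w) \<Longrightarrow>
  LL u w \<odot> (MT u (s#w) \<odot> r) = MT (u@[s]) w \<odot> (LL u (t#w) \<odot> (LL (u@[t]) w \<odot> r))"
  using arg_cong[OF l_mut_atom, of "\<lambda>X. whisk u X w \<odot> r"] by (simp add: chain_simps id_word_vcomp)
lemma l_mus_chain: "endos u \<Longrightarrow> endos w \<Longrightarrow> cod2 K r = comp_word (u@[t,s,s]@w) \<Longrightarrow>
  LL u w \<odot> (MS (u@[t]) w \<odot> r) = MS u (t#w) \<odot> (LL (u@[s]) w \<odot> (LL u (s#w) \<odot> r))"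
  using arg_cong[OF l_mus_atom, of "\<lambda>X. whisk u X w \<odot> r"] by (simp add: chain_simps id_word_vcomp)
lemma l_etat_chain: "endos u \<Longrightarrow> endos w \<Longrightarrow> cod2 K r = comp_word (u@[s]@w) \<Longrightarrow>
  LL u w \<odot> (HT u (s#w) \<odot> r) = MS u (t#w) \<odot> (LL (u@[s]) w \<odot> (HS (u@[s,t]) w \<odot> (HT (u@[s]) w
    \<odot> r)))"
  using arg_cong[OF l_etat_atom, of "\<lambda>X. whisk u X w \<odot> r"] by (simp add: chain_simps id_word_vcomp)
lemma l_etas_chain: "endos u \<Longrightarrow> endos w \<Longrightarrow> cod2 K r = comp_word (u@[t]@w) \<Longrightarrow>
  LL u w \<odot> (HS (u@[t]) w \<odot> r) = MT (u@[s]) w \<odot> (LL u (t#w) \<odot> (HT u (s#t#w) \<odot> (HS u (t#w)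
    \<odot> r)))"
  using arg_cong[OF l_etas_atom, of "\<lambda>X. whisk u X w \<odot> r"] by (simp add: chain_simps id_word_vcomp)

lemma lbar_after_l_atom: "MS [] [t] \<odot> (LL [s] [] \<odot> (HS [s,t] [] \<odot> (LL [] []
  \<odot> id_word [t,s]))) = LL [] [] \<odot> id_word [t,s]"
proof -
  have "MS [] [t] \<odot> (LL [s] [] \<odot> (HS [s,t] [] \<odot> (LL [] [] \<odot> id_word [t,s]))) =
        MS [] [t] \<odot> (LL [s] [] \<odot> (LL [] [s] \<odot> (HS [t,s] [] \<odot> id_word [t,s])))"
    by (simp add: atom_commR)
  also have "\<dots> = LL [] [] \<odot> (MS [t] [] \<odot> (HS [t,s] [] \<odot> id_word [t,s]))"
    using l_mus_chain[of "[]" "[]"] by simp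
  also have "\<dots> = LL [] [] \<odot> id_word [t,s]"
    by (simp add: S.mu_unit_right_chain up_rules)
  finally show ?thesis .
qed

lemma lbar_after_l_chain: "endos u \<Longrightarrow> endos w \<Longrightarrow> cod2 K r = comp_word (u@[t,s]@w) \<Longrightarrow>
  MS u (t#w) \<odot> (LL (u@[s]) w \<odot> (HS (u@[s,t]) w \<odot> (LL u w \<odot> r))) = LL u w \<odot> r"
  using arg_cong[OF lbar_after_l_atom, of "\<lambda>X. whisk u X w \<odot> r"] by (simp add: chain_simps id_word_vcomp)

lemma lbar_absorbs_lbar_atom: "MS [] [t] \<odot> (LL [s] [] \<odot> (MS [] [t,s] \<odot> (LL [s] [s]
  \<odot> (HS [s,t] [s] \<odot> id_word [s,t,s])))) =
   MS [] [t] \<odot> (LL [s] [] \<odot> id_word [s,t,s])"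
proof -
  have "MS [] [t] \<odot> (LL [s] [] \<odot> (MS [] [t,s] \<odot> (LL [s] [s] \<odot> (HS [s,t] [s] \<odot> id_word [s,t,s])))) =
        MS [] [t] \<odot> (MS [] [s,t] \<odot> (LL [s,s] [] \<odot> (LL [s] [s] \<odot> (HS [s,t] [s] \<odot> id_word [s,t,s]))))"
    by (simp add: atom_commR)
  also have "\<dots> = MS [] [t] \<odot> (MS [s] [t] \<odot> (LL [s,s] [] \<odot> (LL [s] [s] \<odot> (HS [s,t] [s]
    \<odot> id_word [s,t,s]))))"
    by (simp add: S.mu_assoc_chain')
  also have "\<dots> = MS [] [t] \<odot> (LL [s] [] \<odot> (MS [s,t] [] \<odot> (HS [s,t] [s] \<odot> id_word [s,t,s])))"
    using l_mus_chain[of "[s]" "[]"] by simp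
  also have "\<dots> = MS [] [t] \<odot> (LL [s] [] \<odot> id_word [s,t,s])"
    by (simp add: S.mu_unit_left_chain up_rules)
  finally show ?thesis .
qed

lemma lbar_absorbs_lbar_atom': "MS [] [t] \<odot> (LL [s] [] \<odot> (HS [s,t] [] \<odot> (MS [] [t] \<odot> (LL [s] []
  \<odot> id_word [s,t,s])))) =
   MS [] [t] \<odot> (LL [s] [] \<odot> id_word [s,t,s])"
proof -
  have "MS [] [t] \<odot> (LL [s] [] \<odot> (HS [s,t] [] \<odot> (MS [] [t] \<odot> (LL [s] [] \<odot> id_word [s,t,s])))) =
        MS [] [t] \<odot> (MS [] [s,t] \<odot> (LL [s,s] [] \<odot> (HS [s,s,t] [] \<odot> (LL [s] [] \<odot> id_word [s,t,s]))))"
    by (simp add: atom_commR)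
  also have "\<dots> = MS [] [t] \<odot> (MS [s] [t] \<odot> (LL [s,s] [] \<odot> (HS [s,s,t] [] \<odot> (LL [s] []
    \<odot> id_word [s,t,s]))))"
    by (simp add: S.mu_assoc_chain')
  also have "\<dots> = MS [] [t] \<odot> (LL [s] [] \<odot> id_word [s,t,s])"
    using lbar_after_l_chain[of "[s]" "[]"] by simp
  finally show ?thesis .
qed

lemma lbar_absorbs_lbar_chain: "endos u \<Longrightarrow> endos w \<Longrightarrow>
  cod2 K r = comp_word (u@[s,t,s]@w) \<Longrightarrow>
  MS u (t#w) \<odot> (LL (u@[s]) w \<odot> (MS u (t#s#w) \<odot> (LL (u@[s]) (s#w) \<odot> (HS (u@[s,t]) (s#w) \<odot> r)))) =
  MS u (t#w) \<odot> (LL (u@[s]) w \<odot> r)"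
  using arg_cong[OF lbar_absorbs_lbar_atom, of "\<lambda>X. whisk u X w \<odot> r"] by (simp add: chain_simps id_word_vcomp)

lemma lbar_absorbs_lbar_chain': "endos u \<Longrightarrow> endos w \<Longrightarrow>
  cod2 K r = comp_word (u@[s,t,s]@w) \<Longrightarrow>
  MS u (t#w) \<odot> (LL (u@[s]) w \<odot> (HS (u@[s,t]) w \<odot> (MS u (t#w) \<odot> (LL (u@[s]) w \<odot> r)))) =
  MS u (t#w) \<odot> (LL (u@[s]) w \<odot> r)"
  using arg_cong[OF lbar_absorbs_lbar_atom', of "\<lambda>X. whisk u X w \<odot> r"] by (simp add: chain_simps id_word_vcomp)

abbreviation "GT u w \<equiv> idem_atom u t tb w"
abbreviation "GS u w \<equiv> idem_atom u s sb w"

lemma lbar_mut_l_atom: "MS [] [t] \<odot> (LL [s] [] \<odot> (HS [s,t] [] \<odot> (MT [s] [] \<odot> (LL [] [t]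
  \<odot> id_word [t,s,t])))) =
  MT [s] [] \<odot> (LL [] [t] \<odot> (MS [t] [t] \<odot> (LL [t,s] [] \<odot> (HS [t,s,t] [] \<odot> id_word [t,s,t]))))"
proof -
  have "MS [] [t] \<odot> (LL [s] [] \<odot> (HS [s,t] [] \<odot> (MT [s] [] \<odot> (LL [] [t] \<odot> id_word [t,s,t])))) =
    MS [] [t] \<odot> (LL [s] [] \<odot> (MT [s] [s] \<odot> (HS [s,t,t] [] \<odot> (LL [] [t] \<odot> id_word [t,s,t]))))"
    by (simp add: atom_commR)
  also have "\<dots> = MS [] [t] \<odot> (MT [s,s] [] \<odot> (LL [s] [t] \<odot> (LL [s,t] [] \<odot> (HS [s,t,t] []
    \<odot> (LL [] [t] \<odot> id_word [t,s,t])))))"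
    using l_mut_chain[of "[s]" "[]"] by simp
  also have "\<dots> = MT [s] [] \<odot> (MS [] [t,t] \<odot> (LL [s] [t] \<odot> (LL [s,t] [] \<odot> (HS [s,t,t] []
    \<odot> (LL [] [t] \<odot> id_word [t,s,t])))))"
    by (simp add: atom_commL)
  also have "\<dots> = MT [s] [] \<odot> (MS [] [t,t] \<odot> (LL [s] [t] \<odot> (LL [] [s,t] \<odot> (LL [t,s] []
    \<odot> (HS [t,s,t] [] \<odot> id_word [t,s,t])))))"
    by (simp add: atom_commR)
  also have "\<dots> = MT [s] [] \<odot> (LL [] [t] \<odot> (MS [t] [t] \<odot> (LL [t,s] [] \<odot> (HS [t,s,t] []
    \<odot> id_word [t,s,t]))))"
    using l_mus_chain[of "[]" "[t]"] by simp
  finally show ?thesis .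
qed

lemma lbar_mut_l_chain: "endos u \<Longrightarrow> endos w \<Longrightarrow> cod2 K r = comp_word (u@[t,s,t]@w) \<Longrightarrow>
  MS u (t#w) \<odot> (LL (u@[s]) w \<odot> (HS (u@[s,t]) w \<odot> (MT (u@[s]) w \<odot> (LL u (t#w) \<odot> r)))) =
  MT (u@[s]) w \<odot> (LL u (t#w) \<odot> (MS (u@[t]) (t#w) \<odot> (LL (u@[t,s]) w \<odot> (HS (u@[t,s,t]) w \<odot> r))))"
  using arg_cong[OF lbar_mut_l_atom, of "\<lambda>X. whisk u X w \<odot> r"] by (simp add: chain_simps id_word_vcomp)

lemma lbar_mus_atom: "MS [] [t] \<odot> (LL [s] [] \<odot> (HS [s,t] [] \<odot> (MS [] [t] \<odot> id_word [s,s,t]))) =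
  MS [] [t] \<odot> (MS [s] [t] \<odot> (LL [s,s] [] \<odot> (HS [s,s,t] [] \<odot> id_word [s,s,t])))"
proof -
  have "MS [] [t] \<odot> (LL [s] [] \<odot> (HS [s,t] [] \<odot> (MS [] [t] \<odot> id_word [s,s,t]))) =
     MS [] [t] \<odot> (MS [] [s,t] \<odot> (LL [s,s] [] \<odot> (HS [s,s,t] [] \<odot> id_word [s,s,t])))"
    by (simp add: atom_commR)
  also have "\<dots> = MS [] [t] \<odot> (MS [s] [t] \<odot> (LL [s,s] [] \<odot> (HS [s,s,t] [] \<odot> id_word [s,s,t])))"
    by (simp add: S.mu_assoc_chain')
  finally show ?thesis .
qed

lemma lbar_mus_chain: "endos u \<Longrightarrow> endos w \<Longrightarrow> cod2 K r = comp_word (u@[s,s,t]@w) \<Longrightarrow>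
  MS u (t#w) \<odot> (LL (u@[s]) w \<odot> (HS (u@[s,t]) w \<odot> (MS u (t#w) \<odot> r))) =
  MS u (t#w) \<odot> (MS (u@[s]) (t#w) \<odot> (LL (u@[s,s]) w \<odot> (HS (u@[s,s,t]) w \<odot> r)))"
  using arg_cong[OF lbar_mus_atom, of "\<lambda>X. whisk u X w \<odot> r"] by (simp add: chain_simps id_word_vcomp)

lemma lbar_etas_atom: "MS [] [t] \<odot> (LL [s] [] \<odot> (HS [s,t] [] \<odot> (HS [] [t] \<odot> id_word [t]))) =
  LL [] [] \<odot> (HS [t] [] \<odot> id_word [t])"
proof -
  have "MS [] [t] \<odot> (LL [s] [] \<odot> (HS [s,t] [] \<odot> (HS [] [t] \<odot> id_word [t]))) =
     MS [] [t] \<odot> (HS [] [s,t] \<odot> (LL [] [] \<odot> (HS [t] [] \<odot> id_word [t])))"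
    by (simp add: atom_commR)
  also have "\<dots> = LL [] [] \<odot> (HS [t] [] \<odot> id_word [t])"
    by (simp add: S.mu_unit_left_chain down_rules)
  finally show ?thesis .
qed

lemma lbar_etas_chain: "endos u \<Longrightarrow> endos w \<Longrightarrow> cod2 K r = comp_word (u@[t]@w) \<Longrightarrow>
  MS u (t#w) \<odot> (LL (u@[s]) w \<odot> (HS (u@[s,t]) w \<odot> (HS u (t#w) \<odot> r))) =
  LL u w \<odot> (HS (u@[t]) w \<odot> r)"
  using arg_cong[OF lbar_etas_atom, of "\<lambda>X. whisk u X w \<odot> r"] by (simp add: chain_simps id_word_vcomp)

lemma lbar_lbar_alt_chain_comm: "MS [] [t] \<odot> (LL [s] [] \<odot> (HS [s,t] [] \<odot> (MT [s] [] \<odot> (LL [] [t]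
  \<odot> (HT [] [s,t] \<odot> id_word [s,t]))))) =
  MT [s] [] \<odot> (LL [] [t] \<odot> (HT [] [s,t] \<odot> (MS [] [t] \<odot> (LL [s] [] \<odot> (HS [s,t] []
    \<odot> id_word [s,t])))))"
proof -
  have "MS [] [t] \<odot> (LL [s] [] \<odot> (HS [s,t] [] \<odot> (MT [s] [] \<odot> (LL [] [t] \<odot> (HT [] [s,t]
    \<odot> id_word [s,t]))))) =
     MT [s] [] \<odot> (LL [] [t] \<odot> (MS [t] [t] \<odot> (LL [t,s] [] \<odot> (HS [t,s,t] [] \<odot> (HT [] [s,t]
       \<odot> id_word [s,t])))))"
    using lbar_mut_l_chain[of "[]" "[]"] by simp
  also have "\<dots> = MT [s] [] \<odot> (LL [] [t] \<odot> (HT [] [s,t] \<odot> (MS [] [t] \<odot> (LL [s] []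
    \<odot> (HS [s,t] [] \<odot> id_word [s,t])))))"
    by (simp add: atom_commL)
  finally show ?thesis .
qed

lemma lbar_lbar_alt_chain_absorb: "MS [] [t] \<odot> (LL [s] [] \<odot> (HS [s,t] [] \<odot> (MT [s] []
  \<odot> (LL [] [t] \<odot> (HT [] [s,t] \<odot> id_word [s,t]))))) =
  MS [] [t] \<odot> (LL [s] [] \<odot> (HS [s,t] [] \<odot> id_word [s,t]))"
proof -
  have "MS [] [t] \<odot> (LL [s] [] \<odot> (HS [s,t] [] \<odot> (MT [s] [] \<odot> (LL [] [t] \<odot> (HT [] [s,t]
    \<odot> id_word [s,t]))))) =
    MS [] [t] \<odot> (LL [s] [] \<odot> (HS [s,t] [] \<odot> (MT [s] [] \<odot> (MS [] [t,t] \<odot> (LL [s] [t]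
      \<odot> (HS [s,t] [t] \<odot> (HT [s] [t] \<odot> id_word [s,t])))))))"
    using l_etat_chain[of "[]" "[t]"] by simp
  also have "\<dots> = MS [] [t] \<odot> (LL [s] [] \<odot> (HS [s,t] [] \<odot> (MS [] [t] \<odot> (MT [s,s] []
    \<odot> (LL [s] [t] \<odot> (HS [s,t] [t] \<odot> (HT [s] [t] \<odot> id_word [s,t])))))))"
    by (simp add: atom_commR)
  also have "\<dots> = MS [] [t] \<odot> (MS [s] [t] \<odot> (LL [s,s] [] \<odot> (HS [s,s,t] [] \<odot> (MT [s,s] []
    \<odot> (LL [s] [t] \<odot> (HS [s,t] [t] \<odot> (HT [s] [t] \<odot> id_word [s,t])))))))"
    using lbar_mus_chain[of "[]" "[]"] by simp
  also have "\<dots> = MS [] [t] \<odot> (MT [s,s] [] \<odot> (LL [s] [t] \<odot> (MS [s,t] [t] \<odot> (LL [s,t,s] []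
    \<odot> (HS [s,t,s,t] [] \<odot> (HS [s,t] [t] \<odot> (HT [s] [t] \<odot> id_word [s,t])))))))"
    using lbar_mut_l_chain[of "[s]" "[]"] by simp
  also have "\<dots> = MS [] [t] \<odot> (MT [s,s] [] \<odot> (LL [s] [t] \<odot> (LL [s,t] [] \<odot> (HS [s,t,t] []
    \<odot> (HT [s] [t] \<odot> id_word [s,t])))))"
    using lbar_etas_chain[of "[s,t]" "[]"] by simp
  also have "\<dots> = MS [] [t] \<odot> (LL [s] [] \<odot> (MT [s] [s] \<odot> (HS [s,t,t] [] \<odot> (HT [s] [t]
    \<odot> id_word [s,t]))))"
    using l_mut_chain[of "[s]" "[]"] by simp
  also have "\<dots> = MS [] [t] \<odot> (LL [s] [] \<odot> (HS [s,t] [] \<odot> (MT [s] [] \<odot> (HT [s] [t]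
    \<odot> id_word [s,t]))))"
    by (simp add: atom_commL)
  also have "\<dots> = MS [] [t] \<odot> (LL [s] [] \<odot> (HS [s,t] [] \<odot> id_word [s,t]))"
    by (simp add: T.mu_unit_left_chain up_rules)
  finally show ?thesis .
qed

lemma lbar_dom_cod: "dom2 K lbar = comp_word [s,t] \<and> cod2 K lbar = comp_word [s,t]"
  unfolding lbar_def wdl_idem_def hcomp_sb_tb_etas hcomp_eq_whisk_right_first[OF S.cell_mu T.cell_tb]
    hcomp_eq_whisk_right_first[OF S.cell_tb cell_l]
  by (simp add: fold_atoms)

lemma lbar_alt_dom_cod: "dom2 K lbar_alt = comp_word [s,t] \<and> cod2 K lbar_alt = comp_word [s,t]"
  unfolding lbar_alt_def hcomp_etat_sb_tb hcomp_eq_whisk_right_first[OF S.cell_tb T.cell_mu]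
    hcomp_eq_whisk_right_first[OF cell_l T.cell_tb]
  by (simp add: fold_atoms)

lemma lbar_id_word: "lbar \<odot> id_word [s,t] = lbar" using vcomp_idr[of lbar] lbar_dom_cod by (simp add: id_word_def)
lemma lbar_alt_id_word: "lbar_alt \<odot> id_word [s,t] = lbar_alt" using vcomp_idr[of lbar_alt] lbar_alt_dom_cod
  by (simp add: id_word_def)

lemma lbar_lbar_alt_comm: "lbar \<odot> lbar_alt = lbar_alt \<odot> lbar"
proof -
  have "lbar \<odot> lbar_alt = (lbar \<odot> id_word [s,t]) \<odot> (lbar_alt \<odot> id_word [s,t])"
    using lbar_id_word lbar_alt_id_word by simp
  also have "\<dots> = MS [] [t] \<odot> (LL [s] [] \<odot> (HS [s,t] [] \<odot> (MT [s] [] \<odot> (LL [] [t]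
    \<odot> (HT [] [s,t] \<odot> id_word [s,t])))))"
    unfolding lbar_chain lbar_alt_chain by (simp add: vcomp_assoc id_word_vcomp)
  also have "\<dots> = (lbar_alt \<odot> id_word [s,t]) \<odot> (lbar \<odot> id_word [s,t])"
    unfolding lbar_chain lbar_alt_chain lbar_lbar_alt_chain_comm by (simp add: vcomp_assoc id_word_vcomp)
  also have "\<dots> = lbar_alt \<odot> lbar" using lbar_id_word lbar_alt_id_word by simp
  finally show ?thesis .
qed

lemma lbar_lbar_alt_absorb: "lbar \<odot> lbar_alt = lbar"
proof -
  have "lbar \<odot> lbar_alt = (lbar \<odot> id_word [s,t]) \<odot> (lbar_alt \<odot> id_word [s,t])"
    using lbar_id_word lbar_alt_id_word by simp
  also have "\<dots> = MS [] [t] \<odot> (LL [s] [] \<odot> (HS [s,t] [] \<odot> (MT [s] [] \<odot> (LL [] [t]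
    \<odot> (HT [] [s,t] \<odot> id_word [s,t])))))"
    unfolding lbar_chain lbar_alt_chain by (simp add: vcomp_assoc id_word_vcomp)
  also have "\<dots> = lbar \<odot> id_word [s,t]" unfolding lbar_lbar_alt_chain_absorb lbar_chain ..
  also have "\<dots> = lbar" using lbar_id_word by simp
  finally show ?thesis .
qed

lemma whisk_lbar_chain: "endos u \<Longrightarrow> endos w \<Longrightarrow> cod2 K r = comp_word (u@[s,t]@w) \<Longrightarrow>
  whisk u lbar w \<odot> r = MS u (t#w) \<odot> (LL (u@[s]) w \<odot> (HS (u@[s,t]) w \<odot> r))"
proof -
  assume h: "endos u" "endos w" "cod2 K r = comp_word (u@[s,t]@w)"
  have "whisk u lbar w \<odot> r = whisk u (lbar \<odot> id_word [s,t]) w \<odot> r" using lbar_id_word by simp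
  then show ?thesis unfolding lbar_chain using h by (simp add: chain_simps id_word_vcomp lbar_dom_cod)
qed

end

lemma cl_wdl_lawI: "two_category K \<Longrightarrow> cl_wdl K A t tb mut etat s sb mus etas l \<Longrightarrow>
  cl_wdl_law K A t tb mut etat s sb mus etas l"
  unfolding cl_wdl_law_def cl_wdl_law_axioms_def cl_mon_def cl_mon_axioms_def endo_2cat_def by (auto simp: cl_wdl_def)

section \<open>Two weak distributive laws over a common monad\<close>

locale cl_wdl_pair = endo_2cat K A + Z: cl_mon K A s0 sb0 mu0 eta0 +
  LP: cl_wdl_law K A sp sbp mup etap s0 sb0 mu0 eta0 lp +
  LQ: cl_wdl_law K A sq sbq muq etaq s0 sb0 mu0 eta0 lq
  for K :: "('o,'m,'c) twocat" and A s0 sb0 mu0 eta0 sp sbp mup etap lp sq sbq muq etaq lq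
begin

abbreviation "M0 u w \<equiv> atom u [s0,s0] mu0 [s0] w"
abbreviation "H0 u w \<equiv> atom u [] eta0 [s0] w"
abbreviation "LPp u w \<equiv> atom u [sp,s0] lp [s0,sp] w"
abbreviation "LQq u w \<equiv> atom u [sq,s0] lq [s0,sq] w"

abbreviation rl :: 'c where "rl \<equiv> rlam K s0 mu0 eta0 sp sq lp lq"

lemma rl_chain: "rl = M0 [] [sp,sq] \<odot> (LPp [s0] [sq] \<odot> (LQq [s0,sp] [] \<odot> H0 [s0,sp,sq] []))"
  unfolding rlam_def
  by (simp add: id2_eq_id_word1 id2_eq_id_word2 id2_eq_id_word3 hcomp_id_word_right[OF Z.cell_mu]
      hcomp_id_word_left[OF LQ.cell_l] hcomp_id_word_left[OF Z.cell_eta] hcomp_id_word_both[OF LP.cell_l] atom_def)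

lemma rl_dom_cod: "dom2 K rl = comp_word [s0,sp,sq] \<and> cod2 K rl = comp_word [s0,sp,sq]"
  unfolding rl_chain by simp

lemma rl_id_word:
  "rl \<odot> id_word [s0,sp,sq] = M0 [] [sp,sq] \<odot> (LPp [s0] [sq] \<odot> (LQq [s0,sp] [] \<odot> (H0 [s0,sp,sq] []
    \<odot> id_word [s0,sp,sq])))"
  unfolding rl_chain by (simp add: vcomp_assoc)

lemma mu0_after_laws_atom:
  "LPp [] [sq] \<odot> (LQq [sp] [] \<odot> (M0 [sp,sq] [] \<odot> id_word [sp,sq,s0,s0])) =
   M0 [] [sp,sq] \<odot> (LPp [s0] [sq] \<odot> (LQq [s0,sp] [] \<odot> (LPp [] [sq,s0] \<odot> (LQq [sp] [s0]
     \<odot> id_word [sp,sq,s0,s0]))))"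
proof -
  have "LPp [] [sq] \<odot> (LQq [sp] [] \<odot> (M0 [sp,sq] [] \<odot> id_word [sp,sq,s0,s0])) =
    LPp [] [sq] \<odot> (M0 [sp] [sq] \<odot> (LQq [sp,s0] [] \<odot> (LQq [sp] [s0] \<odot> id_word [sp,sq,s0,s0])))"
    using LQ.l_mus_chain[of "[sp]" "[]"] by simp
  also have "\<dots> = M0 [] [sp,sq] \<odot> (LPp [s0] [sq] \<odot> (LPp [] [s0,sq] \<odot> (LQq [sp,s0] []
    \<odot> (LQq [sp] [s0] \<odot> id_word [sp,sq,s0,s0]))))"
    using LP.l_mus_chain[of "[]" "[sq]"] by simp
  also have "\<dots> = M0 [] [sp,sq] \<odot> (LPp [s0] [sq] \<odot> (LQq [s0,sp] [] \<odot> (LPp [] [sq,s0]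
    \<odot> (LQq [sp] [s0] \<odot> id_word [sp,sq,s0,s0]))))"
    by (simp add: atom_commR)
  finally show ?thesis .
qed

lemma mu0_after_laws_chain: "endos u \<Longrightarrow> endos w \<Longrightarrow>
  cod2 K r = comp_word (u@[sp,sq,s0,s0]@w) \<Longrightarrow>
  M0 u (sp#sq#w) \<odot> (LPp (u@[s0]) (sq#w) \<odot> (LQq (u@[s0,sp]) w \<odot> (LPp u (sq#s0#w)
    \<odot> (LQq (u@[sp]) (s0#w) \<odot> r)))) =
  LPp u (sq#w) \<odot> (LQq (u@[sp]) w \<odot> (M0 (u@[sp,sq]) w \<odot> r))"
  using arg_cong[OF mu0_after_laws_atom, of "\<lambda>X. whisk u X w \<odot> r"] by (simp add: chain_simps id_word_vcomp)

lemma rl_idem: "rl \<odot> rl = rl"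
proof -
  have "(rl \<odot> rl) \<odot> id_word [s0,sp,sq] =
    M0 [] [sp,sq] \<odot> (LPp [s0] [sq] \<odot> (LQq [s0,sp] [] \<odot> (H0 [s0,sp,sq] [] \<odot>
    (M0 [] [sp,sq] \<odot> (LPp [s0] [sq] \<odot> (LQq [s0,sp] [] \<odot> (H0 [s0,sp,sq] [] \<odot> id_word [s0,sp,sq])))))))"
    unfolding rl_chain by (simp add: vcomp_assoc)
  also have "\<dots> = M0 [] [sp,sq] \<odot> (M0 [] [s0,sp,sq] \<odot> (LPp [s0,s0] [sq] \<odot> (LQq [s0,s0,sp] [] \<odot>
    (LPp [s0] [sq,s0] \<odot> (LQq [s0,sp] [s0] \<odot> (H0 [s0,sp,sq] [s0] \<odot> (H0 [s0,sp,sq] []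
      \<odot> id_word [s0,sp,sq])))))))"
    by (simp add: atom_commR)
  also have "\<dots> = M0 [] [sp,sq] \<odot> (M0 [s0] [sp,sq] \<odot> (LPp [s0,s0] [sq] \<odot> (LQq [s0,s0,sp] [] \<odot>
    (LPp [s0] [sq,s0] \<odot> (LQq [s0,sp] [s0] \<odot> (H0 [s0,sp,sq] [s0] \<odot> (H0 [s0,sp,sq] []
      \<odot> id_word [s0,sp,sq])))))))"
    by (simp add: Z.mu_assoc_chain')
  also have "\<dots> = M0 [] [sp,sq] \<odot> (LPp [s0] [sq] \<odot> (LQq [s0,sp] [] \<odot> (M0 [s0,sp,sq] [] \<odot>
    (H0 [s0,sp,sq] [s0] \<odot> (H0 [s0,sp,sq] [] \<odot> id_word [s0,sp,sq])))))"
    using mu0_after_laws_chain[of "[s0]" "[]"] by simp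
  also have "\<dots> = rl \<odot> id_word [s0,sp,sq]"
    unfolding rl_id_word by (simp add: Z.mu_unit_left_chain up_rules)
  finally show ?thesis
    by (rule vcomp_id_word_cancel) (simp_all add: rl_dom_cod)
qed

lemma rl_idem_2cell: "idem_2cell K (comp1 K s0 (comp1 K sp sq)) rl"
  unfolding idem_2cell_def using rl_dom_cod rl_idem by (simp add: comp_word_three)

lemma hcomp_lbar_p: "hcomp K (wdl_idem K sbp sb0 mu0 eta0 lp) (id2 K sq) = whisk [] LP.lbar [sq]"
  using hcomp_id_word_right[of LP.lbar "[s0,sp]" "[s0,sp]" "[sq]"] LP.lbar_dom_cod
  by (simp add: id2_eq_id_word1 LP.lbar_def cell_def)

lemma hcomp_lbar_q: "hcomp K (id2 K sp) (wdl_idem K sbq sb0 mu0 eta0 lq) = whisk [sp] LQ.lbar []"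
  using hcomp_id_word_left[of LQ.lbar "[s0,sq]" "[s0,sq]" "[sp]"] LQ.lbar_dom_cod
  by (simp add: id2_eq_id_word1 LQ.lbar_def cell_def)

lemma hcomp_lp: "hcomp K lp (id2 K sq) = LPp [] [sq]"
  using hcomp_id_word_right[OF LP.cell_l, of "[sq]"] by (simp add: id2_eq_id_word1 atom_def)

lemma rl_lbar_p: "rl \<odot> hcomp K (wdl_idem K sbp sb0 mu0 eta0 lp) (id2 K sq) = rl"
proof -
  have "(rl \<odot> whisk [] LP.lbar [sq]) \<odot> id_word [s0,sp,sq] =
    M0 [] [sp,sq] \<odot> (LPp [s0] [sq] \<odot> (LQq [s0,sp] [] \<odot> (H0 [s0,sp,sq] [] \<odot>
    (whisk [] LP.lbar [sq] \<odot> id_word [s0,sp,sq]))))"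
    unfolding rl_chain using LP.lbar_dom_cod by (simp add: vcomp_assoc)
  also have "\<dots> = M0 [] [sp,sq] \<odot> (LPp [s0] [sq] \<odot> (LQq [s0,sp] [] \<odot> (H0 [s0,sp,sq] [] \<odot>
    (M0 [] [sp,sq] \<odot> (LPp [s0] [sq] \<odot> (H0 [s0,sp] [sq] \<odot> id_word [s0,sp,sq]))))))"
    using LP.whisk_lbar_chain[of "[]" "[sq]"] by simp
  also have "\<dots> = M0 [] [sp,sq] \<odot> (LPp [s0] [sq] \<odot> (M0 [] [sp,s0,sq] \<odot> (LPp [s0] [s0,sq] \<odot>
    (H0 [s0,sp] [s0,sq] \<odot> (LQq [s0,sp] [] \<odot> (H0 [s0,sp,sq] [] \<odot> id_word [s0,sp,sq]))))))"
    by (simp add: atom_commR)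
  also have "\<dots> = rl \<odot> id_word [s0,sp,sq]"
    unfolding rl_id_word using LP.lbar_absorbs_lbar_chain[of "[]" "[sq]"] by simp
  finally show ?thesis
    unfolding hcomp_lbar_p by (rule vcomp_id_word_cancel) (simp_all add: rl_dom_cod LP.lbar_dom_cod)
qed

lemma lbar_p_rl: "rl = hcomp K (wdl_idem K sbp sb0 mu0 eta0 lp) (id2 K sq) \<odot> rl"
proof -
  have "(whisk [] LP.lbar [sq] \<odot> rl) \<odot> id_word [s0,sp,sq] =
    whisk [] LP.lbar [sq] \<odot> (M0 [] [sp,sq] \<odot> (LPp [s0] [sq] \<odot> (LQq [s0,sp] [] \<odot>
    (H0 [s0,sp,sq] [] \<odot> id_word [s0,sp,sq]))))"
    unfolding rl_chain using LP.lbar_dom_cod by (simp add: vcomp_assoc)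
  also have "\<dots> = M0 [] [sp,sq] \<odot> (LPp [s0] [sq] \<odot> (H0 [s0,sp] [sq] \<odot> (M0 [] [sp,sq] \<odot>
    (LPp [s0] [sq] \<odot> (LQq [s0,sp] [] \<odot> (H0 [s0,sp,sq] [] \<odot> id_word [s0,sp,sq]))))))"
    using LP.whisk_lbar_chain[of "[]" "[sq]"] by simp
  also have "\<dots> = rl \<odot> id_word [s0,sp,sq]"
    unfolding rl_id_word using LP.lbar_absorbs_lbar_chain'[of "[]" "[sq]"] by simp
  finally show ?thesis
    unfolding hcomp_lbar_p by (rule vcomp_id_word_cancel[symmetric]) (simp_all add: rl_dom_cod LP.lbar_dom_cod)
qed

lemma rl_lp:
  "rl \<odot> hcomp K lp (id2 K sq) = hcomp K lp (id2 K sq) \<odot> hcomp K (id2 K sp) (wdl_idem K sbq sb0 mu0 eta0 lq)"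
proof -
  have "(rl \<odot> LPp [] [sq]) \<odot> id_word [sp,s0,sq] =
    M0 [] [sp,sq] \<odot> (LPp [s0] [sq] \<odot> (LQq [s0,sp] [] \<odot> (H0 [s0,sp,sq] [] \<odot> (LPp [] [sq]
      \<odot> id_word [sp,s0,sq]))))"
    unfolding rl_chain by (simp add: vcomp_assoc)
  also have "\<dots> = M0 [] [sp,sq] \<odot> (LPp [s0] [sq] \<odot> (LPp [] [s0,sq] \<odot> (LQq [sp,s0] [] \<odot>
    (H0 [sp,s0,sq] [] \<odot> id_word [sp,s0,sq]))))"
    by (simp add: atom_commR)
  also have "\<dots> = LPp [] [sq] \<odot> (M0 [sp] [sq] \<odot> (LQq [sp,s0] [] \<odot> (H0 [sp,s0,sq] []
    \<odot> id_word [sp,s0,sq])))"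
    using LP.l_mus_chain[of "[]" "[sq]"] by simp
  also have "\<dots> = LPp [] [sq] \<odot> (whisk [sp] LQ.lbar [] \<odot> id_word [sp,s0,sq])"
    using LQ.whisk_lbar_chain[of "[sp]" "[]"] by simp
  also have "\<dots> = (LPp [] [sq] \<odot> whisk [sp] LQ.lbar []) \<odot> id_word [sp,s0,sq]"
    using LQ.lbar_dom_cod by (simp add: vcomp_assoc)
  finally show ?thesis
    unfolding hcomp_lbar_q hcomp_lp by (rule vcomp_id_word_cancel) (simp_all add: rl_dom_cod LQ.lbar_dom_cod)
qed

end

section \<open>Three weak distributive laws satisfying the Yang--Baxter relation\<close>

locale cl_wdl2 = endo_2cat K A +
  Z: cl_mon K A s0 sb0 mu0 eta0 + O: cl_mon K A s1 sb1 mu1 eta1 + T: cl_mon K A s2 sb2 mu2 eta2 +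
  L01: cl_wdl_law K A s1 sb1 mu1 eta1 s0 sb0 mu0 eta0 l01 +
  L02: cl_wdl_law K A s2 sb2 mu2 eta2 s0 sb0 mu0 eta0 l02 +
  L12: cl_wdl_law K A s2 sb2 mu2 eta2 s1 sb1 mu1 eta1 l12
  for K :: "('o,'m,'c) twocat" and A s0 sb0 mu0 eta0 s1 sb1 mu1 eta1 s2 sb2 mu2 eta2 l01 l02 l12 +
  assumes yang_baxter: "vcomp K (hcomp K l01 sb2) (vcomp K (hcomp K sb1 l02) (hcomp K l12 sb0)) =
     vcomp K (hcomp K sb0 l12) (vcomp K (hcomp K l02 sb1) (hcomp K sb2 l01))"
begin

sublocale P12: cl_wdl_pair K A s0 sb0 mu0 eta0 s1 sb1 mu1 eta1 l01 s2 sb2 mu2 eta2 l02 by intro_locales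
sublocale P21: cl_wdl_pair K A s0 sb0 mu0 eta0 s2 sb2 mu2 eta2 l02 s1 sb1 mu1 eta1 l01 by intro_locales

abbreviation "M0 u w \<equiv> atom u [s0,s0] mu0 [s0] w"
abbreviation "H0 u w \<equiv> atom u [] eta0 [s0] w"
abbreviation "M2 u w \<equiv> atom u [s2,s2] mu2 [s2] w"
abbreviation "H2 u w \<equiv> atom u [] eta2 [s2] w"
abbreviation "La u w \<equiv> atom u [s1,s0] l01 [s0,s1] w"
abbreviation "Lb u w \<equiv> atom u [s2,s0] l02 [s0,s2] w"
abbreviation "Lc u w \<equiv> atom u [s2,s1] l12 [s1,s2] w"

lemmas fold_atoms3 = atom_def[of _ "[s1,s0]" l01 "[s0,s1]", symmetric] atom_def[of _ "[s2,s0]" l02 "[s0,s2]", symmetric]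
  atom_def[of _ "[s2,s1]" l12 "[s1,s2]", symmetric]
  idem_atom_def[of _ s0 sb0, symmetric] idem_atom_def[of _ s1 sb1, symmetric] idem_atom_def[of _ s2 sb2, symmetric]

lemma yang_baxter_atom: "La [] [s2] \<odot> (Lb [s1] [] \<odot> (Lc [] [s0] \<odot> id_word [s2,s1,s0])) =
  Lc [s0] [] \<odot> (Lb [] [s1] \<odot> (La [s2] [] \<odot> id_word [s2,s1,s0]))"
proof -
  have "(vcomp K (hcomp K l01 sb2) (vcomp K (hcomp K sb1 l02) (hcomp K l12 sb0))) \<odot> id_word [s2,s1,s0] =
     (vcomp K (hcomp K sb0 l12) (vcomp K (hcomp K l02 sb1) (hcomp K sb2 l01))) \<odot> id_word [s2,s1,s0]"
    using yang_baxter by simp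
  then show ?thesis
    unfolding hcomp_eq_whisk_left_first[OF L01.cell_l T.cell_tb] hcomp_eq_whisk_right_first[OF O.cell_tb L02.cell_l]
      hcomp_eq_whisk_left_first[OF L12.cell_l Z.cell_tb] hcomp_eq_whisk_right_first[OF Z.cell_tb L12.cell_l]
      hcomp_eq_whisk_left_first[OF L02.cell_l O.cell_tb] hcomp_eq_whisk_right_first[OF T.cell_tb L01.cell_l]
    by (simp add: fold_atoms3 chain_simps; (simp add: up_rules)?; (simp add: down_rules)?)
qed

lemma yang_baxter_chain: "endos u \<Longrightarrow> endos w \<Longrightarrow>
  cod2 K r = comp_word (u@[s2,s1,s0]@w) \<Longrightarrow>
  La u (s2#w) \<odot> (Lb (u@[s1]) w \<odot> (Lc u (s0#w) \<odot> r)) = Lc (u@[s0]) w \<odot> (Lb u (s1#w)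
    \<odot> (La (u@[s2]) w \<odot> r))"
  using arg_cong[OF yang_baxter_atom, of "\<lambda>X. whisk u X w \<odot> r"] by (simp add: chain_simps id_word_vcomp)

lemma rl_l12: "P12.rl \<odot> hcomp K (id2 K s0) l12 = hcomp K (id2 K s0) l12 \<odot> P21.rl"
proof -
  have c: "hcomp K (id2 K s0) l12 = Lc [s0] []"
    using hcomp_id_word_left[OF L12.cell_l, of "[s0]"] by (simp add: id2_eq_id_word1 atom_def)
  have "(P12.rl \<odot> Lc [s0] []) \<odot> id_word [s0,s2,s1] = M0 [] [s1,s2] \<odot> (La [s0] [s2]
    \<odot> (Lb [s0,s1] [] \<odot> (H0 [s0,s1,s2] [] \<odot>
     (Lc [s0] [] \<odot> id_word [s0,s2,s1]))))"
    unfolding P12.rl_chain by (simp add: vcomp_assoc)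
  also have "\<dots> = M0 [] [s1,s2] \<odot> (La [s0] [s2] \<odot> (Lb [s0,s1] [] \<odot> (Lc [s0] [s0]
    \<odot> (H0 [s0,s2,s1] [] \<odot> id_word [s0,s2,s1]))))"
    by (simp add: atom_commR)
  also have "\<dots> = M0 [] [s1,s2] \<odot> (Lc [s0,s0] [] \<odot> (Lb [s0] [s1] \<odot> (La [s0,s2] []
    \<odot> (H0 [s0,s2,s1] [] \<odot> id_word [s0,s2,s1]))))"
    using yang_baxter_chain[of "[s0]" "[]"] by simp
  also have "\<dots> = Lc [s0] [] \<odot> (M0 [] [s2,s1] \<odot> (Lb [s0] [s1] \<odot> (La [s0,s2] []
    \<odot> (H0 [s0,s2,s1] [] \<odot> id_word [s0,s2,s1]))))"
    by (simp add: atom_commR)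
  also have "\<dots> = (Lc [s0] [] \<odot> P21.rl) \<odot> id_word [s0,s2,s1]"
    unfolding P21.rl_chain by (simp add: vcomp_assoc)
  finally show ?thesis
    unfolding c by (rule vcomp_id_word_cancel) (simp_all add: P12.rl_dom_cod P21.rl_dom_cod)
qed

abbreviation ll :: 'c where "ll \<equiv> llam K s0 s1 s2 mu2 eta2 l02 l12"

lemma ll_chain: "ll = M2 [s0,s1] [] \<odot> (Lc [s0] [s2] \<odot> (Lb [] [s1,s2] \<odot> H2 [] [s0,s1,s2]))"
  unfolding llam_def
  by (simp add: id2_eq_id_word1 id2_eq_id_word2 id2_eq_id_word3 hcomp_id_word_left[OF T.cell_mu]
      hcomp_id_word_right[OF L02.cell_l] hcomp_id_word_right[OF T.cell_eta] hcomp_id_word_both[OF L12.cell_l] atom_def)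

lemma ll_dom_cod: "dom2 K ll = comp_word [s0,s1,s2] \<and> cod2 K ll = comp_word [s0,s1,s2]"
  unfolding ll_chain by simp

lemma mu2_l02_eta0_atom: "M2 [s0] [] \<odot> (Lb [] [s2] \<odot> (H0 [s2] [s2] \<odot> id_word [s2,s2])) = Lb [] []
  \<odot> (M2 [] [s0] \<odot> (H0 [s2,s2] [] \<odot> id_word [s2,s2]))"
proof -
  have "Lb [] [] \<odot> (M2 [] [s0] \<odot> (H0 [s2,s2] [] \<odot> id_word [s2,s2])) = Lb [] [] \<odot> (H0 [s2] []
    \<odot> (M2 [] [] \<odot> id_word [s2,s2]))"
    by (simp add: atom_commL)
  also have "\<dots> = M2 [s0] [] \<odot> (Lb [] [s2] \<odot> (H2 [] [s0,s2] \<odot> (H0 [] [s2] \<odot> (M2 [] []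
    \<odot> id_word [s2,s2]))))"
    using L02.l_etas_chain[of "[]" "[]"] by simp
  also have "\<dots> = M2 [s0] [] \<odot> (M2 [s0,s2] [] \<odot> (Lb [] [s2,s2] \<odot> (H2 [] [s0,s2,s2]
    \<odot> (H0 [] [s2,s2] \<odot> id_word [s2,s2]))))"
    by (simp add: atom_commL)
  also have "\<dots> = M2 [s0] [] \<odot> (M2 [s0] [s2] \<odot> (Lb [] [s2,s2] \<odot> (H2 [] [s0,s2,s2]
    \<odot> (H0 [] [s2,s2] \<odot> id_word [s2,s2]))))"
    by (simp add: T.mu_assoc_chain)
  also have "\<dots> = M2 [s0] [] \<odot> (Lb [] [s2] \<odot> (H0 [s2] [s2] \<odot> id_word [s2,s2]))"
    using L02.l_etas_chain[of "[]" "[s2]"] by simp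
  finally show ?thesis ..
qed

lemma mu2_l02_eta0_chain: "endos u \<Longrightarrow> endos w \<Longrightarrow>
  cod2 K r = comp_word (u@[s2,s2]@w) \<Longrightarrow>
  M2 (u@[s0]) w \<odot> (Lb u (s2#w) \<odot> (H0 (u@[s2]) (s2#w) \<odot> r)) = Lb u w \<odot> (M2 u (s0#w)
    \<odot> (H0 (u@[s2,s2]) w \<odot> r))"
  using arg_cong[OF mu2_l02_eta0_atom, of "\<lambda>X. whisk u X w \<odot> r"] by (simp add: chain_simps id_word_vcomp)

abbreviation "LR_normal \<equiv> M0 [] [s1,s2] \<odot> (La [s0] [s2] \<odot> (Lb [s0,s1] [] \<odot> (M2 [s0,s1] [s0]
  \<odot> (H0 [s0,s1,s2,s2] [] \<odot>
   (Lc [s0] [s2] \<odot> (Lb [] [s1,s2] \<odot> (H2 [] [s0,s1,s2] \<odot> id_word [s0,s1,s2])))))))"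

lemma ll_rl_normal: "(ll \<odot> P12.rl) \<odot> id_word [s0,s1,s2] = LR_normal"
proof -
  have "(ll \<odot> P12.rl) \<odot> id_word [s0,s1,s2] = M2 [s0,s1] [] \<odot> (Lc [s0] [s2] \<odot> (Lb [] [s1,s2]
    \<odot> (H2 [] [s0,s1,s2] \<odot>
     (M0 [] [s1,s2] \<odot> (La [s0] [s2] \<odot> (Lb [s0,s1] [] \<odot> (H0 [s0,s1,s2] [] \<odot> id_word [s0,s1,s2])))))))"
    unfolding ll_chain P12.rl_chain by (simp add: vcomp_assoc)
  also have "\<dots> = M2 [s0,s1] [] \<odot> (Lc [s0] [s2] \<odot> (Lb [] [s1,s2] \<odot> (M0 [s2] [s1,s2]
    \<odot> (La [s2,s0] [s2] \<odot>
     (Lb [s2,s0,s1] [] \<odot> (H0 [s2,s0,s1,s2] [] \<odot> (H2 [] [s0,s1,s2] \<odot> id_word [s0,s1,s2])))))))"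
    by (simp add: atom_commL)
  also have "\<dots> = M2 [s0,s1] [] \<odot> (Lc [s0] [s2] \<odot> (M0 [] [s2,s1,s2] \<odot> (Lb [s0] [s1,s2]
    \<odot> (Lb [] [s0,s1,s2] \<odot> (La [s2,s0] [s2] \<odot>
     (Lb [s2,s0,s1] [] \<odot> (H0 [s2,s0,s1,s2] [] \<odot> (H2 [] [s0,s1,s2] \<odot> id_word [s0,s1,s2]))))))))"
    using L02.l_mus_chain[of "[]" "[s1,s2]"] by simp
  also have "\<dots> = M2 [s0,s1] [] \<odot> (M0 [] [s1,s2,s2] \<odot> (Lc [s0,s0] [s2] \<odot> (Lb [s0] [s1,s2]
    \<odot> (Lb [] [s0,s1,s2] \<odot> (La [s2,s0] [s2] \<odot>
     (Lb [s2,s0,s1] [] \<odot> (H0 [s2,s0,s1,s2] [] \<odot> (H2 [] [s0,s1,s2] \<odot> id_word [s0,s1,s2]))))))))"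
    by (simp add: atom_commR)
  also have "\<dots> = M2 [s0,s1] [] \<odot> (M0 [] [s1,s2,s2] \<odot> (Lc [s0,s0] [s2] \<odot> (Lb [s0] [s1,s2]
    \<odot> (La [s0,s2] [s2] \<odot>
     (Lb [s0,s2,s1] [] \<odot> (H0 [s0,s2,s1,s2] [] \<odot> (Lb [] [s1,s2] \<odot> (H2 [] [s0,s1,s2]
       \<odot> id_word [s0,s1,s2]))))))))"
    by (simp add: atom_commL)
  also have "\<dots> = M2 [s0,s1] [] \<odot> (M0 [] [s1,s2,s2] \<odot> (La [s0] [s2,s2] \<odot> (Lb [s0,s1] [s2]
    \<odot> (Lc [s0] [s0,s2] \<odot>
     (Lb [s0,s2,s1] [] \<odot> (H0 [s0,s2,s1,s2] [] \<odot> (Lb [] [s1,s2] \<odot> (H2 [] [s0,s1,s2]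
       \<odot> id_word [s0,s1,s2]))))))))"
    using yang_baxter_chain[of "[s0]" "[s2]"] by simp
  also have "\<dots> = M2 [s0,s1] [] \<odot> (M0 [] [s1,s2,s2] \<odot> (La [s0] [s2,s2] \<odot> (Lb [s0,s1] [s2]
    \<odot> (Lb [s0,s1,s2] [] \<odot>
     (H0 [s0,s1,s2,s2] [] \<odot> (Lc [s0] [s2] \<odot> (Lb [] [s1,s2] \<odot> (H2 [] [s0,s1,s2]
       \<odot> id_word [s0,s1,s2]))))))))"
    by (simp add: atom_commL)
  also have "\<dots> = M0 [] [s1,s2] \<odot> (La [s0] [s2] \<odot> (M2 [s0,s1,s0] [] \<odot> (Lb [s0,s1] [s2]
    \<odot> (Lb [s0,s1,s2] [] \<odot>
     (H0 [s0,s1,s2,s2] [] \<odot> (Lc [s0] [s2] \<odot> (Lb [] [s1,s2] \<odot> (H2 [] [s0,s1,s2]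
       \<odot> id_word [s0,s1,s2]))))))))"
    by (simp add: atom_commR)
  also have "\<dots> = LR_normal"
    using L02.l_mut_chain[of "[s0,s1]" "[]"] by simp
  finally show ?thesis .
qed

lemma ll_lbar01_normal: "(ll \<odot> whisk [] L01.lbar [s2]) \<odot> id_word [s0,s1,s2] = LR_normal"
proof -
  have "(ll \<odot> whisk [] L01.lbar [s2]) \<odot> id_word [s0,s1,s2] = M2 [s0,s1] [] \<odot> (Lc [s0] [s2]
    \<odot> (Lb [] [s1,s2] \<odot> (H2 [] [s0,s1,s2] \<odot>
     (whisk [] L01.lbar [s2] \<odot> id_word [s0,s1,s2]))))"
    unfolding ll_chain using L01.lbar_dom_cod by (simp add: vcomp_assoc)
  also have "\<dots> = M2 [s0,s1] [] \<odot> (Lc [s0] [s2] \<odot> (Lb [] [s1,s2] \<odot> (H2 [] [s0,s1,s2] \<odot>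
     (M0 [] [s1,s2] \<odot> (La [s0] [s2] \<odot> (H0 [s0,s1] [s2] \<odot> id_word [s0,s1,s2]))))))"
    using L01.whisk_lbar_chain[of "[]" "[s2]"] by simp
  also have "\<dots> = M2 [s0,s1] [] \<odot> (Lc [s0] [s2] \<odot> (Lb [] [s1,s2] \<odot> (M0 [s2] [s1,s2]
    \<odot> (La [s2,s0] [s2] \<odot>
     (H0 [s2,s0,s1] [s2] \<odot> (H2 [] [s0,s1,s2] \<odot> id_word [s0,s1,s2]))))))"
    by (simp add: atom_commL)
  also have "\<dots> = M2 [s0,s1] [] \<odot> (Lc [s0] [s2] \<odot> (M0 [] [s2,s1,s2] \<odot> (Lb [s0] [s1,s2]
    \<odot> (Lb [] [s0,s1,s2] \<odot> (La [s2,s0] [s2] \<odot>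
     (H0 [s2,s0,s1] [s2] \<odot> (H2 [] [s0,s1,s2] \<odot> id_word [s0,s1,s2])))))))"
    using L02.l_mus_chain[of "[]" "[s1,s2]"] by simp
  also have "\<dots> = M2 [s0,s1] [] \<odot> (M0 [] [s1,s2,s2] \<odot> (Lc [s0,s0] [s2] \<odot> (Lb [s0] [s1,s2]
    \<odot> (Lb [] [s0,s1,s2] \<odot> (La [s2,s0] [s2] \<odot>
     (H0 [s2,s0,s1] [s2] \<odot> (H2 [] [s0,s1,s2] \<odot> id_word [s0,s1,s2])))))))"
    by (simp add: atom_commR)
  also have "\<dots> = M2 [s0,s1] [] \<odot> (M0 [] [s1,s2,s2] \<odot> (Lc [s0,s0] [s2] \<odot> (Lb [s0] [s1,s2]
    \<odot> (La [s0,s2] [s2] \<odot>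
     (H0 [s0,s2,s1] [s2] \<odot> (Lb [] [s1,s2] \<odot> (H2 [] [s0,s1,s2] \<odot> id_word [s0,s1,s2])))))))"
    by (simp add: atom_commL)
  also have "\<dots> = M2 [s0,s1] [] \<odot> (M0 [] [s1,s2,s2] \<odot> (La [s0] [s2,s2] \<odot> (Lb [s0,s1] [s2]
    \<odot> (Lc [s0] [s0,s2] \<odot>
     (H0 [s0,s2,s1] [s2] \<odot> (Lb [] [s1,s2] \<odot> (H2 [] [s0,s1,s2] \<odot> id_word [s0,s1,s2])))))))"
    using yang_baxter_chain[of "[s0]" "[s2]"] by simp
  also have "\<dots> = M2 [s0,s1] [] \<odot> (M0 [] [s1,s2,s2] \<odot> (La [s0] [s2,s2] \<odot> (Lb [s0,s1] [s2] \<odot>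
     (H0 [s0,s1,s2] [s2] \<odot> (Lc [s0] [s2] \<odot> (Lb [] [s1,s2] \<odot> (H2 [] [s0,s1,s2] \<odot> id_word [s0,s1,s2])))))))"
    by (simp add: atom_commL)
  also have "\<dots> = M0 [] [s1,s2] \<odot> (La [s0] [s2] \<odot> (M2 [s0,s1,s0] [] \<odot> (Lb [s0,s1] [s2] \<odot>
     (H0 [s0,s1,s2] [s2] \<odot> (Lc [s0] [s2] \<odot> (Lb [] [s1,s2] \<odot> (H2 [] [s0,s1,s2] \<odot> id_word [s0,s1,s2])))))))"
    by (simp add: atom_commR)
  also have "\<dots> = LR_normal"
    using mu2_l02_eta0_chain[of "[s0,s1]" "[]"] by simp
  finally show ?thesis .
qed

lemma rl_ll_normal: "(P12.rl \<odot> ll) \<odot> id_word [s0,s1,s2] = LR_normal"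
proof -
  have "(P12.rl \<odot> ll) \<odot> id_word [s0,s1,s2] = M0 [] [s1,s2] \<odot> (La [s0] [s2] \<odot> (Lb [s0,s1] []
    \<odot> (H0 [s0,s1,s2] [] \<odot>
     (M2 [s0,s1] [] \<odot> (Lc [s0] [s2] \<odot> (Lb [] [s1,s2] \<odot> (H2 [] [s0,s1,s2] \<odot> id_word [s0,s1,s2])))))))"
    unfolding ll_chain P12.rl_chain by (simp add: vcomp_assoc)
  also have "\<dots> = LR_normal" by (simp add: atom_commR)
  finally show ?thesis .
qed

lemma ll_rl: "ll \<odot> P12.rl = ll \<odot> hcomp K (wdl_idem K sb1 sb0 mu0 eta0 l01) (id2 K s2)"
  unfolding P12.hcomp_lbar_p
  by (rule vcomp_id_word_cancel[where X="[s0,s1,s2]"])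
    (simp_all add: ll_rl_normal ll_lbar01_normal ll_dom_cod P12.rl_dom_cod L01.lbar_dom_cod)

lemma ll_rl_comm: "ll \<odot> P12.rl = P12.rl \<odot> ll"
  by (rule vcomp_id_word_cancel[where X="[s0,s1,s2]"])
    (simp_all add: ll_rl_normal rl_ll_normal ll_dom_cod P12.rl_dom_cod)

end

lemma cl_wdl2I: "two_category K \<Longrightarrow>
  wdl2_cell K A s0 sb0 mu0 eta0 s1 sb1 mu1 eta1 s2 sb2 mu2 eta2 l01 l02 l12 \<Longrightarrow>
   cl_wdl2 K A s0 sb0 mu0 eta0 s1 sb1 mu1 eta1 s2 sb2 mu2 eta2 l01 l02 l12"
proof -
  assume a: "two_category K" "wdl2_cell K A s0 sb0 mu0 eta0 s1 sb1 mu1 eta1 s2 sb2 mu2 eta2 l01 l02 l12"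
  have w: "cl_wdl_law K A s1 sb1 mu1 eta1 s0 sb0 mu0 eta0 l01" "cl_wdl_law K A s2 sb2 mu2 eta2 s0 sb0 mu0 eta0 l02"
     "cl_wdl_law K A s2 sb2 mu2 eta2 s1 sb1 mu1 eta1 l12"
    using a cl_wdl_lawI unfolding wdl2_cell_def by auto
  show ?thesis using w a(2) unfolding cl_wdl2_def cl_wdl2_axioms_def wdl2_cell_def cl_wdl_law_def cl_mon_def endo_2cat_def by auto
qed

section \<open>The horizontal opposite\<close>

definition hop :: "('o,'m,'c) twocat \<Rightarrow> ('o,'m,'c) twocat" where
  "hop K = \<lparr>src = tgt K, tgt = src K, comp1 = (\<lambda>u w. comp1 K w u), id1 = id1 K, dom2 = dom2 K,
     cod2 = cod2 K, vcomp = vcomp K, hcomp = (\<lambda>a b. hcomp K b a), id2 = id2 K\<rparr>"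

lemma hop_simps[simp]:
  "src (hop K) = tgt K" "tgt (hop K) = src K" "comp1 (hop K) = (\<lambda>u w. comp1 K w u)"
  "id1 (hop K) = id1 K" "dom2 (hop K) = dom2 K" "cod2 (hop K) = cod2 K" "vcomp (hop K) = vcomp K"
  "hcomp (hop K) = (\<lambda>a b. hcomp K b a)" "id2 (hop K) = id2 K"
  by (simp_all add: hop_def)

lemma two_category_hop:
  assumes "two_category K"
  shows "two_category (hop K)"
proof -
  interpret two_category K by fact
  show ?thesis
    by unfold_locales
      (simp_all add: id1_src id1_tgt comp1_src comp1_tgt id2_dom id2_cod vcomp_dom vcomp_cod vcomp_assoc
        vcomp_idl vcomp_idr hcomp_id2 par_src par_tgt,
       (metis comp1_assoc comp1_idl comp1_idr hcomp_dom hcomp_cod hcomp_assoc hcomp_idl hcomp_idr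
        interchange par_src par_tgt)+)
qed

lemma hop_hop: "hop (hop K) = K"
  by (simp add: hop_def)

lemma idem_2cell_hop: "idem_2cell (hop K) x e = idem_2cell K x e"
  by (simp add: idem_2cell_def)

lemma cl_monad_hop: "cl_monad K A t tb mu eta \<Longrightarrow> cl_monad (hop K) A t tb mu eta"
  unfolding cl_monad_def idem_2cell_def cl_2cell_def by auto

lemma cl_wdl_hop: "cl_wdl K A t tb mut etat s sb mus etas l \<Longrightarrow> cl_wdl (hop K) A s sb mus etas t tb mut etat l"
  unfolding cl_wdl_def using cl_monad_hop unfolding cl_2cell_def by auto

lemma wdl2_cell_hop: "wdl2_cell K A s0 sb0 mu0 eta0 s1 sb1 mu1 eta1 s2 sb2 mu2 eta2 l01 l02 l12 \<Longrightarrow>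
  wdl2_cell (hop K) A s2 sb2 mu2 eta2 s1 sb1 mu1 eta1 s0 sb0 mu0 eta0 l12 l02 l01"
  unfolding wdl2_cell_def using cl_wdl_hop by auto

lemma (in endo_2cat) rlam_hop:
  "endo sk \<Longrightarrow> endo sl \<Longrightarrow> endo s \<Longrightarrow> cell ll [s,sl] [sl,s] \<Longrightarrow>
    rlam (hop K) s mu eta sl sk ll lk = llam K sk sl s mu eta lk ll"
  unfolding rlam_def llam_def hop_simps
  using hcomp_assoc_cell[OF cell_id_word[of "[sk]"] _ cell_id_word[of "[s]"], of ll "[s,sl]" "[sl,s]"]
  by (simp add: id2_eq_id_word1 comp1_assoc endo_def)

text \<open>In hop K the roles of the two formulas for the idempotent of a weak distributive law are
  exchanged. So each absorbs the other, and as they commute they coincide.\<close>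

lemma wdl_idem_alt:
  assumes "two_category K" "cl_wdl K A t tb mut etat s sb mus etas l"
  shows "wdl_idem K tb sb mus etas l =
    vcomp K (hcomp K sb mut) (vcomp K (hcomp K l tb) (hcomp K etat (hcomp K sb tb)))"
proof -
  interpret w: cl_wdl_law K A t tb mut etat s sb mus etas l by (rule cl_wdl_lawI[OF assms])
  interpret r: cl_wdl_law "hop K" A s sb mus etas t tb mut etat l
    by (rule cl_wdl_lawI[OF two_category_hop[OF assms(1)] cl_wdl_hop[OF assms(2)]])
  have swap: "r.lbar = w.lbar_alt" "r.lbar_alt = w.lbar"
    by (simp_all add: r.lbar_def w.lbar_alt_def r.lbar_alt_def w.lbar_def wdl_idem_def)
  have "w.lbar = vcomp K w.lbar w.lbar_alt" using w.lbar_lbar_alt_absorb by simp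
  also have "\<dots> = vcomp K w.lbar_alt w.lbar" using w.lbar_lbar_alt_comm .
  also have "\<dots> = w.lbar_alt" using r.lbar_lbar_alt_absorb unfolding swap by simp
  finally show ?thesis unfolding w.lbar_def w.lbar_alt_def .
qed

lemma wdl_idem_hop:
  assumes "two_category K" "cl_wdl K A t tb mut etat s sb mus etas l"
  shows "wdl_idem (hop K) sb tb mut etat l = wdl_idem K tb sb mus etas l"
  using wdl_idem_alt[OF assms] by (simp add: wdl_idem_def)

text \<open>The statements about llam are those about rlam for the Yang--Baxter triple obtained in hop K
  by reversing the order of the three monads.\<close>

theorem lemma2p2:
  fixes K :: "('o,'m,'c) twocat" and A :: 'o
    and s0 s1 s2 :: 'm
    and sb0 sb1 sb2 mu0 mu1 mu2 eta0 eta1 eta2 l01 l02 l12 :: 'c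
  assumes "two_category K"
    and "wdl2_cell K A s0 sb0 mu0 eta0 s1 sb1 mu1 eta1 s2 sb2 mu2 eta2 l01 l02 l12"
  defines "b01 \<equiv> wdl_idem K sb1 sb0 mu0 eta0 l01"
    and "b02 \<equiv> wdl_idem K sb2 sb0 mu0 eta0 l02"
    and "b12 \<equiv> wdl_idem K sb2 sb1 mu1 eta1 l12"
    and "R012 \<equiv> rlam K s0 mu0 eta0 s1 s2 l01 l02"
    and "R021 \<equiv> rlam K s0 mu0 eta0 s2 s1 l02 l01"
    and "L012 \<equiv> llam K s0 s1 s2 mu2 eta2 l02 l12"
    and "L102 \<equiv> llam K s1 s0 s2 mu2 eta2 l12 l02"
  shows
    \<comment> \<open>idempotence in K\<close>
    "idem_2cell K (comp1 K s0 (comp1 K s1 s2)) R012 \<and>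
     idem_2cell K (comp1 K s0 (comp1 K s2 s1)) R021 \<and>
     idem_2cell K (comp1 K s0 (comp1 K s1 s2)) L012 \<and>
     idem_2cell K (comp1 K s1 (comp1 K s0 s2)) L102 \<and>
    \<comment> \<open>(1)\<close>
     vcomp K R012 (hcomp K b01 (id2 K s2)) = R012 \<and>
     R012 = vcomp K (hcomp K b01 (id2 K s2)) R012 \<and>
     vcomp K R021 (hcomp K b02 (id2 K s1)) = R021 \<and>
     R021 = vcomp K (hcomp K b02 (id2 K s1)) R021 \<and>
    \<comment> \<open>(2)\<close>
     vcomp K R012 (hcomp K (id2 K s0) l12) = vcomp K (hcomp K (id2 K s0) l12) R021 \<and>
    \<comment> \<open>(3)\<close>
     vcomp K R012 (hcomp K l01 (id2 K s2)) =
       vcomp K (hcomp K l01 (id2 K s2)) (hcomp K (id2 K s1) b02) \<and>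
     vcomp K R021 (hcomp K l02 (id2 K s1)) =
       vcomp K (hcomp K l02 (id2 K s1)) (hcomp K (id2 K s2) b01) \<and>
    \<comment> \<open>(4)\<close>
     vcomp K L012 (hcomp K (id2 K s0) b12) = L012 \<and>
     L012 = vcomp K (hcomp K (id2 K s0) b12) L012 \<and>
     vcomp K L102 (hcomp K (id2 K s1) b02) = L102 \<and>
     L102 = vcomp K (hcomp K (id2 K s1) b02) L102 \<and>
    \<comment> \<open>(5)\<close>
     vcomp K L012 (hcomp K l01 (id2 K s2)) = vcomp K (hcomp K l01 (id2 K s2)) L102 \<and>
    \<comment> \<open>(6)\<close>
     vcomp K L012 (hcomp K (id2 K s0) l12) =
       vcomp K (hcomp K (id2 K s0) l12) (hcomp K b02 (id2 K s1)) \<and>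
     vcomp K L102 (hcomp K (id2 K s1) l02) =
       vcomp K (hcomp K (id2 K s1) l02) (hcomp K b12 (id2 K s0)) \<and>
    \<comment> \<open>(7)\<close>
     vcomp K L012 R012 = vcomp K L012 (hcomp K b01 (id2 K s2)) \<and>
     vcomp K L012 (hcomp K b01 (id2 K s2)) = vcomp K R012 (hcomp K (id2 K s0) b12) \<and>
     vcomp K R012 (hcomp K (id2 K s0) b12) = vcomp K R012 L012"
proof -
  interpret W: cl_wdl2 K A s0 sb0 mu0 eta0 s1 sb1 mu1 eta1 s2 sb2 mu2 eta2 l01 l02 l12
    using cl_wdl2I[OF assms(1,2)] .
  interpret V: cl_wdl2 "hop K" A s2 sb2 mu2 eta2 s1 sb1 mu1 eta1 s0 sb0 mu0 eta0 l12 l02 l01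
    using cl_wdl2I[OF two_category_hop wdl2_cell_hop] assms(1,2) .
  have laws: "cl_wdl K A s2 sb2 mu2 eta2 s0 sb0 mu0 eta0 l02" "cl_wdl K A s2 sb2 mu2 eta2 s1 sb1 mu1 eta1 l12"
    using assms(2) unfolding wdl2_cell_def by auto
  have hop_eqs:
    "rlam (hop K) s2 mu2 eta2 s1 s0 l12 l02 = L012" "rlam (hop K) s2 mu2 eta2 s0 s1 l02 l12 = L102"
    "llam (hop K) s2 s1 s0 mu0 eta0 l02 l01 = R012"
    "wdl_idem (hop K) sb1 sb2 mu2 eta2 l12 = b12" "wdl_idem (hop K) sb0 sb2 mu2 eta2 l02 = b02"
    unfolding assms(3-9)
    using W.rlam_hop[of s0 s1 s2 l12] W.rlam_hop[of s1 s0 s2 l02] V.rlam_hop[of s2 s1 s0 l01 mu0 eta0 l02]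
      wdl_idem_hop[OF assms(1) laws(1)] wdl_idem_hop[OF assms(1) laws(2)]
    by (simp_all add: hop_hop)
  have assoc: "comp1 K (comp1 K s0 s1) s2 = comp1 K s0 (comp1 K s1 s2)"
    "comp1 K (comp1 K s1 s0) s2 = comp1 K s1 (comp1 K s0 s2)"
    using W.comp1_assoc W.Z.endo_t W.O.endo_t W.T.endo_t unfolding W.endo_def by auto
  show ?thesis
    using W.P12.rl_idem_2cell W.P21.rl_idem_2cell V.P12.rl_idem_2cell V.P21.rl_idem_2cell
      W.P12.rl_lbar_p W.P12.lbar_p_rl W.P21.rl_lbar_p W.P21.lbar_p_rl W.rl_l12 W.P12.rl_lp W.P21.rl_lp
      V.P12.rl_lbar_p V.P12.lbar_p_rl V.P21.rl_lbar_p V.P21.lbar_p_rl V.rl_l12 V.P12.rl_lp V.P21.rl_lp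
      W.ll_rl V.ll_rl W.ll_rl_comm
    unfolding hop_simps hop_eqs idem_2cell_hop assoc assms(3-9) by simp
qed

end
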